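(* Let $k=k(n)$ and $m=m(n)$ be functions of $n$ such that $m\geq n$. (i) If $\liminf_{n\rightarrow\infty} \frac{k^2n}{m\log n}>1$, then asymptotically almost surely $G(n,m,k)$ is connected. (ii) If $\limsup_{n\rightarrow\infty} \frac{k^2n}{m\log n}<1$, then asymptotically almost surely $G(n,m,k)$ is not connected.
   Context: The uniform random intersection graph $G(n,m,k)$ (for positive integers $k\le m$) is the random graph on a set $V$ of $n$ nodes defined as follows: fix a set $M$ of $m$ colours; to each node $v\in V$ assign a subset $F_v\subseteq M$ of exactly $k$ distinct colours, chosen uniformly at random among all $k$-subsets of $M$, independently for different nodes; distinct nodes $u,v$ are joined by an edge if and only if $F_u\cap F_v\neq\emptyset$. An event holds asymptotically almost surely if its probability tends to $1$ as $n\rightarrow\infty$. Here $\log$ denotes the natural logarithm. *)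

theory Defs
  imports "HOL-Analysis.Analysis"
begin

text \<open>Sample space of the uniform random intersection graph G(n,m,k):
  nodes {..<n}, colours {..<m}; each node gets a k-subset of colours,
  independently and uniformly, i.e. the uniform distribution on all
  assignments below.\<close>
definition rig_space :: "nat \<Rightarrow> nat \<Rightarrow> nat \<Rightarrow> (nat \<Rightarrow> nat set) set" where
  "rig_space n m k = (\<Pi>\<^sub>E v\<in>{..<n}. {S. S \<subseteq> {..<m} \<and> card S = k})"

definition rig_edges :: "nat \<Rightarrow> (nat \<Rightarrow> nat set) \<Rightarrow> (nat \<times> nat) set" where
  "rig_edges n F = {(u, v). u \<in> {..<n} \<and> v \<in> {..<n} \<and> u \<noteq> v \<and> F u \<inter> F v \<noteq> {}}"

definition rig_connected :: "nat \<Rightarrow> (nat \<Rightarrow> nat set) \<Rightarrow> bool" where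
  "rig_connected n F \<longleftrightarrow> (\<forall>u\<in>{..<n}. \<forall>v\<in>{..<n}. (u, v) \<in> (rig_edges n F)\<^sup>*)"

definition rig_prob :: "nat \<Rightarrow> nat \<Rightarrow> nat \<Rightarrow> ((nat \<Rightarrow> nat set) \<Rightarrow> bool) \<Rightarrow> real" where
  "rig_prob n m k P = real (card {F \<in> rig_space n m k. P F}) / real (card (rig_space n m k))"

end

theory Submission
  imports Defs "HOL-Real_Asymp.Real_Asymp"
begin

text \<open>
  Upper threshold: if the graph is disconnected, some vertex set S of size 1 \<le> s \<le> n/2 has no
  edge to its complement. For a colour threshold t = t(s), either the colours of S lie inside
  some t-set of colours (unlikely, by a union bound over the t-sets), or S uses at least t
  colours and the n - s other vertices all avoid them (unlikely, since each does so with
  probability at most exp(-kt/m)). With t just below ks for small s and t about 3m/k for large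
  s, the union bound over all s tends to 0 as soon as k^2 n \<ge> (1 + \<delta>) m ln n.

  Lower threshold: a graph with an isolated vertex is disconnected. The number X of isolated
  vertices has mean \<mu> = n q^(n-1), where q = C(m-k,k)/C(m,k) \<ge> 1 - k^2/(m-k+1), so \<mu> grows
  like a positive power of n when k^2 n \<le> y m ln n with y < 1; the second moment method gives
  P(X = 0) \<le> 1/\<mu> + 1/q - 1, which tends to 0.
\<close>

definition k_subsets :: "nat \<Rightarrow> nat \<Rightarrow> nat set set" where
  "k_subsets m k = {S. S \<subseteq> {..<m} \<and> card S = k}"

lemma finite_k_subsets [simp]: "finite (k_subsets m k)"
  unfolding k_subsets_def by (rule finite_subset[of _ "Pow {..<m}"]) auto

lemma card_k_subsets: "card (k_subsets m k) = m choose k"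
  unfolding k_subsets_def using n_subsets[of "{..<m}" k] by simp

lemma rig_space_eq_PiE: "rig_space n m k = PiE {..<n} (\<lambda>_. k_subsets m k)"
  unfolding rig_space_def k_subsets_def by simp

lemma finite_rig_space [simp]: "finite (rig_space n m k)"
  unfolding rig_space_eq_PiE by (simp add: finite_PiE)

lemma card_rig_space: "card (rig_space n m k) = (m choose k) ^ n"
  unfolding rig_space_eq_PiE by (simp add: card_PiE card_k_subsets)

lemma rig_space_nonempty: "k \<le> m \<Longrightarrow> rig_space n m k \<noteq> {}"
  using card_rig_space[of n m k] by (metis card.empty zero_less_binomial power_not_zero less_not_refl)

lemma rig_prob_le_1: "rig_prob n m k P \<le> 1"
proof -
  have "card {F \<in> rig_space n m k. P F} \<le> card (rig_space n m k)" by (intro card_mono) auto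
  then show ?thesis
    unfolding rig_prob_def by (cases "card (rig_space n m k) = 0") (simp_all add: divide_le_eq_1 del: card_0_eq)
qed

lemma rig_prob_eq_1_minus_not:
  assumes "k \<le> m"
  shows "rig_prob n m k P = 1 - rig_prob n m k (\<lambda>F. \<not> P F)"
proof -
  have "rig_space n m k \<noteq> {}" using assms by (rule rig_space_nonempty)
  moreover have "card {F \<in> rig_space n m k. P F} + card {F \<in> rig_space n m k. \<not> P F} = card (rig_space n m k)"
    by (subst card_Un_disjoint[symmetric]) (auto intro: arg_cong[where f=card])
  then have "real (card {F \<in> rig_space n m k. P F})
      = real (card (rig_space n m k)) - real (card {F \<in> rig_space n m k. \<not> P F})"
    by linarith
  ultimately show ?thesis
    unfolding rig_prob_def by (simp add: diff_divide_distrib)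
qed

lemma card_PiE_restrict_eq:
  fixes I J :: "'a set" and A :: "'b set"
  assumes "finite I" "J \<subseteq> I" "g \<in> PiE J (\<lambda>_. A)" "B \<subseteq> A"
  shows "card {F \<in> PiE I (\<lambda>_. A). restrict F J = g \<and> (\<forall>v\<in>I-J. F v \<in> B)} = card B ^ card (I - J)"
proof -
  let ?X = "{F \<in> PiE I (\<lambda>_. A). restrict F J = g \<and> (\<forall>v\<in>I-J. F v \<in> B)}"
  have "bij_betw (\<lambda>F. restrict F (I - J)) ?X (PiE (I - J) (\<lambda>_. B))"
  proof (rule bij_betw_byWitness[where f' = "\<lambda>h v. if v \<in> J then g v else h v"])
    show "\<forall>F\<in>?X. (\<lambda>v. if v \<in> J then g v else restrict F (I - J) v) = F"
    proof
      fix F assume F: "F \<in> ?X"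
      show "(\<lambda>v. if v \<in> J then g v else restrict F (I - J) v) = F"
      proof
        fix v show "(if v \<in> J then g v else restrict F (I - J) v) = F v"
          using F assms(2) by (auto simp: restrict_def PiE_def extensional_def fun_eq_iff split: if_splits)
      qed
    qed
    show "\<forall>h\<in>PiE (I - J) (\<lambda>_. B). restrict (\<lambda>v. if v \<in> J then g v else h v) (I - J) = h"
      by (auto simp: restrict_def PiE_def extensional_def fun_eq_iff)
    show "(\<lambda>F. restrict F (I - J)) ` ?X \<subseteq> PiE (I - J) (\<lambda>_. B)"
      by auto
    show "(\<lambda>h v. if v \<in> J then g v else h v) ` PiE (I - J) (\<lambda>_. B) \<subseteq> ?X"
      using assms by (auto simp: restrict_def PiE_def extensional_def fun_eq_iff Pi_def subset_iff)
  qed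
  then have "card ?X = card (PiE (I - J) (\<lambda>_. B))" by (rule bij_betw_same_card)
  also have "\<dots> = card B ^ card (I - J)"
    using assms(1) by (simp add: card_PiE)
  finally show ?thesis .
qed

lemma card_PiE_restrict_in:
  fixes I J :: "'a set" and A :: "'b set"
  assumes "finite I" "J \<subseteq> I" "finite A" "G \<subseteq> PiE J (\<lambda>_. A)" "\<And>g. g \<in> G \<Longrightarrow> B g \<subseteq> A"
  shows "card {F \<in> PiE I (\<lambda>_. A). restrict F J \<in> G \<and> (\<forall>v\<in>I-J. F v \<in> B (restrict F J))}
       = (\<Sum>g\<in>G. card (B g) ^ card (I - J))"
proof -
  have fin_G: "finite G"
    using assms by (metis finite_PiE finite_subset rev_finite_subset)
  have "{F \<in> PiE I (\<lambda>_. A). restrict F J \<in> G \<and> (\<forall>v\<in>I-J. F v \<in> B (restrict F J))}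
      = (\<Union>g\<in>G. {F \<in> PiE I (\<lambda>_. A). restrict F J = g \<and> (\<forall>v\<in>I-J. F v \<in> B g)})"
    by auto
  also have "card \<dots> = (\<Sum>g\<in>G. card {F \<in> PiE I (\<lambda>_. A). restrict F J = g \<and> (\<forall>v\<in>I-J. F v \<in> B g)})"
    by (rule card_UN_disjoint) (use fin_G assms(1,3) in \<open>auto intro: finite_subset[OF _ finite_PiE[of I "\<lambda>_. A"]]\<close>)
  also have "\<dots> = (\<Sum>g\<in>G. card (B g) ^ card (I - J))"
    using assms by (intro sum.cong refl card_PiE_restrict_eq) auto
  finally show ?thesis .
qed

lemma card_k_subsets_disjoint:
  assumes "U \<subseteq> {..<m}"
  shows "card {X \<in> k_subsets m k. U \<inter> X = {}} = (m - card U) choose k"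
proof -
  have "{X \<in> k_subsets m k. U \<inter> X = {}} = {X. X \<subseteq> {..<m} - U \<and> card X = k}"
    unfolding k_subsets_def by auto
  moreover have "card ({..<m} - U) = m - card U"
    using assms by (simp add: card_Diff_subset finite_subset)
  ultimately show ?thesis using n_subsets[of "{..<m} - U" k] by simp
qed

lemma card_k_subsets_within:
  assumes "A \<subseteq> {..<m}"
  shows "card {X \<in> k_subsets m k. X \<subseteq> A} = card A choose k"
proof -
  have "{X \<in> k_subsets m k. X \<subseteq> A} = {X. X \<subseteq> A \<and> card X = k}"
    unfolding k_subsets_def using assms by auto
  then show ?thesis using n_subsets[of A k] assms finite_subset by fastforce
qed

lemma obtain_superset_with_card:
  assumes "U \<subseteq> {..<m}" "card U \<le> t" "t \<le> m"
  obtains A where "U \<subseteq> A" "A \<subseteq> {..<m}" "card A = t"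
proof -
  have fin_U: "finite U" using assms finite_subset by blast
  have "t - card U \<le> card ({..<m} - U)" using assms fin_U by (simp add: card_Diff_subset)
  then obtain B where B: "B \<subseteq> {..<m} - U" "card B = t - card U"
    by (meson obtain_subset_with_card_n)
  have "card (U \<union> B) = t"
    using B fin_U assms(2) finite_subset[OF B(1)] by (subst card_Un_disjoint) auto
  then show ?thesis using that[of "U \<union> B"] B assms by auto
qed

subsection \<open>Disconnected graphs have a separated small vertex set\<close>

definition separated :: "nat \<Rightarrow> nat set \<Rightarrow> (nat \<Rightarrow> nat set) \<Rightarrow> bool" where
  "separated n S F \<longleftrightarrow> (\<forall>u\<in>S. \<forall>v\<in>{..<n}-S. F u \<inter> F v = {})"

lemma card_assignments_within:
  assumes "S \<subseteq> {..<n}" "A \<subseteq> {..<m}"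
  shows "card {F \<in> rig_space n m k. \<forall>v\<in>S. F v \<subseteq> A}
         = (card A choose k) ^ card S * (m choose k) ^ (n - card S)"
proof -
  let ?J = "{..<n} - S"
  have eq: "{F \<in> rig_space n m k. \<forall>v\<in>S. F v \<subseteq> A}
    = {F \<in> PiE {..<n} (\<lambda>_. k_subsets m k). restrict F ?J \<in> PiE ?J (\<lambda>_. k_subsets m k)
         \<and> (\<forall>v\<in>{..<n}-?J. F v \<in> (\<lambda>_. {X \<in> k_subsets m k. X \<subseteq> A}) (restrict F ?J))}"
    using assms unfolding rig_space_eq_PiE by (auto simp: PiE_iff)
  have "card {F \<in> rig_space n m k. \<forall>v\<in>S. F v \<subseteq> A}
      = (\<Sum>g\<in>PiE ?J (\<lambda>_. k_subsets m k). card {X \<in> k_subsets m k. X \<subseteq> A} ^ card ({..<n} - ?J))"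
    unfolding eq by (rule card_PiE_restrict_in) auto
  also have "\<dots> = (m choose k) ^ (n - card S) * (card A choose k) ^ card S"
  proof -
    have "{..<n} - ?J = S" using assms by auto
    moreover have "card ?J = n - card S"
      using assms by (simp add: card_Diff_subset finite_subset)
    ultimately show ?thesis
      by (simp add: card_k_subsets_within[OF assms(2)] card_PiE card_k_subsets)
  qed
  finally show ?thesis by (simp add: mult.commute)
qed

lemma card_separated_spread_le:
  assumes "S \<subseteq> {..<n}"
  shows "card {F \<in> rig_space n m k. t \<le> card (\<Union>(F ` S)) \<and> separated n S F}
         \<le> (m choose k) ^ card S * ((m - t) choose k) ^ (n - card S)"
proof -
  let ?G = "{g \<in> PiE S (\<lambda>_. k_subsets m k). t \<le> card (\<Union>(g ` S))}"
  let ?B = "\<lambda>g. {X \<in> k_subsets m k. \<Union>(g ` S) \<inter> X = {}}"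
  have sub: "{F \<in> rig_space n m k. t \<le> card (\<Union>(F ` S)) \<and> separated n S F}
    \<subseteq> {F \<in> PiE {..<n} (\<lambda>_. k_subsets m k). restrict F S \<in> ?G
         \<and> (\<forall>v\<in>{..<n}-S. F v \<in> ?B (restrict F S))}"
  proof
    fix F assume F: "F \<in> {F \<in> rig_space n m k. t \<le> card (\<Union>(F ` S)) \<and> separated n S F}"
    have im: "restrict F S ` S = F ` S" by auto
    show "F \<in> {F \<in> PiE {..<n} (\<lambda>_. k_subsets m k). restrict F S \<in> ?G
         \<and> (\<forall>v\<in>{..<n}-S. F v \<in> ?B (restrict F S))}"
      using F assms unfolding rig_space_eq_PiE separated_def im by (simp add: PiE_iff, blast)
  qed
  have "card {F \<in> rig_space n m k. t \<le> card (\<Union>(F ` S)) \<and> separated n S F}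
     \<le> card {F \<in> PiE {..<n} (\<lambda>_. k_subsets m k). restrict F S \<in> ?G
         \<and> (\<forall>v\<in>{..<n}-S. F v \<in> ?B (restrict F S))}"
    by (rule card_mono[OF _ sub]) (simp add: finite_PiE)
  also have "\<dots> = (\<Sum>g\<in>?G. card (?B g) ^ card ({..<n} - S))"
    using assms by (intro card_PiE_restrict_in) auto
  also have "\<dots> \<le> (\<Sum>g\<in>?G. ((m - t) choose k) ^ (n - card S))"
  proof (rule sum_mono)
    fix g assume g: "g \<in> ?G"
    have U: "\<Union>(g ` S) \<subseteq> {..<m}" using g unfolding k_subsets_def by (auto simp: PiE_iff)
    have "card (?B g) = (m - card (\<Union>(g ` S))) choose k" by (rule card_k_subsets_disjoint[OF U])
    also have "\<dots> \<le> (m - t) choose k" using g by (intro binomial_right_mono) auto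
    finally show "card (?B g) ^ card ({..<n} - S) \<le> ((m - t) choose k) ^ (n - card S)"
      using assms by (simp add: card_Diff_subset finite_subset power_mono)
  qed
  also have "\<dots> = card ?G * ((m - t) choose k) ^ (n - card S)" by simp
  also have "\<dots> \<le> (m choose k) ^ card S * ((m - t) choose k) ^ (n - card S)"
  proof -
    have "card ?G \<le> card (PiE S (\<lambda>_. k_subsets m k))"
      using assms by (intro card_mono) (auto simp: finite_PiE finite_subset)
    also have "\<dots> = (m choose k) ^ card S"
      using assms by (simp add: card_PiE card_k_subsets finite_subset)
    finally show ?thesis by (simp add: mult_right_mono)
  qed
  finally show ?thesis .
qed

lemma card_separated_le:
  assumes "S \<subseteq> {..<n}" "t \<le> m"
  shows "card {F \<in> rig_space n m k. separated n S F}
         \<le> (m choose t) * ((t choose k) ^ card S * (m choose k) ^ (n - card S))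
           + (m choose k) ^ card S * ((m - t) choose k) ^ (n - card S)"
proof -
  let ?Om = "rig_space n m k"
  let ?As = "{A. A \<subseteq> {..<m} \<and> card A = t}"
  let ?Within = "\<Union>A\<in>?As. {F \<in> ?Om. \<forall>v\<in>S. F v \<subseteq> A}"
  let ?Spread = "{F \<in> ?Om. t \<le> card (\<Union>(F ` S)) \<and> separated n S F}"
  have fin_As: "finite ?As" by (rule finite_subset[of _ "Pow {..<m}"]) auto
  have sub: "{F \<in> ?Om. separated n S F} \<subseteq> ?Within \<union> ?Spread"
  proof
    fix F assume F: "F \<in> {F \<in> ?Om. separated n S F}"
    show "F \<in> ?Within \<union> ?Spread"
    proof (cases "t \<le> card (\<Union>(F ` S))")
      case True then show ?thesis using F by auto
    next
      case False
      have U: "\<Union>(F ` S) \<subseteq> {..<m}"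
        using F assms unfolding rig_space_eq_PiE k_subsets_def by (auto simp: PiE_iff)
      obtain A where "\<Union>(F ` S) \<subseteq> A" "A \<subseteq> {..<m}" "card A = t"
        using obtain_superset_with_card[OF U _ assms(2)] False by auto
      then show ?thesis using F by blast
    qed
  qed
  have "card {F \<in> ?Om. separated n S F} \<le> card (?Within \<union> ?Spread)"
    by (rule card_mono[OF _ sub]) auto
  also have "\<dots> \<le> card ?Within + card ?Spread"
    by (rule card_Un_le)
  also have "card ?Within \<le> (\<Sum>A\<in>?As. card {F \<in> ?Om. \<forall>v\<in>S. F v \<subseteq> A})"
    by (rule card_UN_le[OF fin_As])
  also have "\<dots> = (\<Sum>A\<in>?As. (t choose k) ^ card S * (m choose k) ^ (n - card S))"
    by (rule sum.cong) (use assms in \<open>auto simp: card_assignments_within\<close>)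
  also have "\<dots> = (m choose t) * ((t choose k) ^ card S * (m choose k) ^ (n - card S))"
    using n_subsets[of "{..<m}" t] by simp
  finally show ?thesis using card_separated_spread_le[OF assms(1), of m k t] by linarith
qed

lemma separated_complement:
  assumes "separated n C F"
  shows "separated n ({..<n} - C) F"
  unfolding separated_def
proof (intro ballI)
  fix x w assume "x \<in> {..<n} - C" and "w \<in> {..<n} - ({..<n} - C)"
  then have "F w \<inter> F x = {}" using assms unfolding separated_def by blast
  then show "F x \<inter> F w = {}" by blast
qed

lemma not_connected_imp_separated:
  assumes "\<not> rig_connected n F"
  shows "\<exists>S. S \<subseteq> {..<n} \<and> S \<noteq> {} \<and> 2 * card S \<le> n \<and> separated n S F"
proof -
  obtain u v where uv: "u \<in> {..<n}" "v \<in> {..<n}" "(u, v) \<notin> (rig_edges n F)\<^sup>*"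
    using assms unfolding rig_connected_def by blast
  define C where "C = {w \<in> {..<n}. (u, w) \<in> (rig_edges n F)\<^sup>*}"
  have "u \<in> C" "v \<notin> C" "C \<subseteq> {..<n}" using uv unfolding C_def by auto
  have sep_C: "separated n C F"
    unfolding separated_def
  proof (intro ballI)
    fix w x assume w: "w \<in> C" and x: "x \<in> {..<n} - C"
    show "F w \<inter> F x = {}"
    proof (rule ccontr)
      assume "F w \<inter> F x \<noteq> {}"
      with w x \<open>C \<subseteq> {..<n}\<close> have "(w, x) \<in> rig_edges n F" unfolding rig_edges_def by auto
      with w have "(u, x) \<in> (rig_edges n F)\<^sup>*" unfolding C_def by (auto intro: rtrancl_into_rtrancl)
      with x show False unfolding C_def by auto
    qed
  qed
  show ?thesis
  proof (cases "2 * card C \<le> n")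
    case True then show ?thesis using \<open>u \<in> C\<close> \<open>C \<subseteq> {..<n}\<close> sep_C by (intro exI[of _ C]) auto
  next
    case False
    have "card ({..<n} - C) = n - card C"
      using \<open>C \<subseteq> {..<n}\<close> by (simp add: card_Diff_subset finite_subset)
    then have "2 * card ({..<n} - C) \<le> n" using False by linarith
    moreover have "{..<n} - C \<noteq> {}" using \<open>v \<notin> C\<close> uv by auto
    ultimately show ?thesis using separated_complement[OF sep_C] by (intro exI[of _ "{..<n} - C"]) auto
  qed
qed

lemma card_disconnected_le:
  "card {F \<in> rig_space n m k. \<not> rig_connected n F}
   \<le> (\<Sum>s\<in>{1..n div 2}. \<Sum>S\<in>{S. S \<subseteq> {..<n} \<and> card S = s}. card {F \<in> rig_space n m k. separated n S F})"
proof -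
  let ?Om = "rig_space n m k"
  have fin_S: "\<And>s. finite {S. S \<subseteq> {..<n} \<and> card S = s}"
    by (rule finite_subset[of _ "Pow {..<n}"]) auto
  have sub: "{F \<in> ?Om. \<not> rig_connected n F}
      \<subseteq> (\<Union>s\<in>{1..n div 2}. \<Union>S\<in>{S. S \<subseteq> {..<n} \<and> card S = s}. {F \<in> ?Om. separated n S F})"
  proof
    fix F assume F: "F \<in> {F \<in> ?Om. \<not> rig_connected n F}"
    then obtain S where S: "S \<subseteq> {..<n}" "S \<noteq> {}" "2 * card S \<le> n" "separated n S F"
      using not_connected_imp_separated by blast
    have "card S \<ge> 1" using S(1,2) finite_subset[OF S(1)] by (simp add: Suc_le_eq card_gt_0_iff)
    then have "card S \<in> {1..n div 2}" using S(3) by auto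
    then show "F \<in> (\<Union>s\<in>{1..n div 2}. \<Union>S\<in>{S. S \<subseteq> {..<n} \<and> card S = s}. {F \<in> ?Om. separated n S F})"
      using S F by (intro UN_I[of "card S"] UN_I[of S]) auto
  qed
  have "card {F \<in> ?Om. \<not> rig_connected n F}
      \<le> card (\<Union>s\<in>{1..n div 2}. \<Union>S\<in>{S. S \<subseteq> {..<n} \<and> card S = s}. {F \<in> ?Om. separated n S F})"
    by (rule card_mono[OF _ sub]) auto
  also have "\<dots> \<le> (\<Sum>s\<in>{1..n div 2}. card (\<Union>S\<in>{S. S \<subseteq> {..<n} \<and> card S = s}. {F \<in> ?Om. separated n S F}))"
    by (rule card_UN_le) simp
  also have "\<dots> \<le> (\<Sum>s\<in>{1..n div 2}. \<Sum>S\<in>{S. S \<subseteq> {..<n} \<and> card S = s}. card {F \<in> ?Om. separated n S F})"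
    by (intro sum_mono card_UN_le fin_S)
  finally show ?thesis .
qed

text \<open>The two summands of the union bound for a separated set of size s and a colour
  threshold t: its colours lie inside some t-set (confined), or it uses at least t colours
  which all other vertices avoid (spread).\<close>

definition confined_bound :: "nat \<Rightarrow> nat \<Rightarrow> nat \<Rightarrow> nat \<Rightarrow> nat \<Rightarrow> real" where
  "confined_bound n m k s t =
     real (n choose s) * (real (m choose t) * (real (t choose k) / real (m choose k)) ^ s)"

definition spread_bound :: "nat \<Rightarrow> nat \<Rightarrow> nat \<Rightarrow> nat \<Rightarrow> nat \<Rightarrow> real" where
  "spread_bound n m k s t = real (n choose s) * (real ((m - t) choose k) / real (m choose k)) ^ (n - s)"

lemma rig_prob_disconnected_le:
  fixes t :: "nat \<Rightarrow> nat"
  assumes tm: "\<And>s. t s \<le> m" and km: "k \<le> m"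
  shows "rig_prob n m k (\<lambda>F. \<not> rig_connected n F)
     \<le> (\<Sum>s\<in>{1..n div 2}. confined_bound n m k s (t s) + spread_bound n m k s (t s))"
proof -
  let ?C = "real (m choose k)"
  have C_pos: "?C > 0" using km by simp
  let ?b = "\<lambda>s. (m choose t s) * ((t s choose k) ^ s * (m choose k) ^ (n - s))
           + (m choose k) ^ s * ((m - t s) choose k) ^ (n - s)"
  have "card {F \<in> rig_space n m k. \<not> rig_connected n F}
     \<le> (\<Sum>s\<in>{1..n div 2}. \<Sum>S\<in>{S. S \<subseteq> {..<n} \<and> card S = s}. card {F \<in> rig_space n m k. separated n S F})"
    by (rule card_disconnected_le)
  also have "\<dots> \<le> (\<Sum>s\<in>{1..n div 2}. \<Sum>S\<in>{S. S \<subseteq> {..<n} \<and> card S = s}. ?b s)"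
  proof (intro sum_mono)
    fix s S assume "S \<in> {S. S \<subseteq> {..<n} \<and> card S = s}"
    then show "card {F \<in> rig_space n m k. separated n S F} \<le> ?b s"
      using card_separated_le[of S n "t s" m k] tm by simp
  qed
  also have "\<dots> = (\<Sum>s\<in>{1..n div 2}. (n choose s) * ?b s)"
    using n_subsets[of "{..<n}"] by simp
  finally have le: "card {F \<in> rig_space n m k. \<not> rig_connected n F} \<le> (\<Sum>s\<in>{1..n div 2}. (n choose s) * ?b s)" .
  have "rig_prob n m k (\<lambda>F. \<not> rig_connected n F)
       = real (card {F \<in> rig_space n m k. \<not> rig_connected n F}) / ?C ^ n"
    unfolding rig_prob_def card_rig_space by simp
  also have "\<dots> \<le> (\<Sum>s\<in>{1..n div 2}. real (n choose s) * real (?b s)) / ?C ^ n"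
    using of_nat_mono[OF le, where 'a=real] C_pos by (simp add: divide_right_mono)
  also have "\<dots> = (\<Sum>s\<in>{1..n div 2}. real (n choose s) * (real (?b s) / ?C ^ n))"
    by (simp add: sum_divide_distrib)
  also have "\<dots> = (\<Sum>s\<in>{1..n div 2}. confined_bound n m k s (t s) + spread_bound n m k s (t s))"
  proof (rule sum.cong[OF refl])
    fix s assume "s \<in> {1..n div 2}"
    then have n_split: "n = s + (n - s)" by auto
    have pw: "?C ^ n = ?C ^ s * ?C ^ (n - s)"
      by (subst n_split) (simp add: power_add)
    have "real (?b s) / ?C ^ n = real (m choose t s) * (real (t s choose k) / ?C) ^ s
           + (real ((m - t s) choose k) / ?C) ^ (n - s)"
      unfolding pw using C_pos by (simp add: power_divide divide_simps)
    then show "real (n choose s) * (real (?b s) / ?C ^ n)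
        = confined_bound n m k s (t s) + spread_bound n m k s (t s)"
      unfolding confined_bound_def spread_bound_def by (simp add: distrib_left)
  qed
  finally show ?thesis .
qed

subsection \<open>Isolated vertices and the second moment method\<close>

definition isolated :: "nat \<Rightarrow> (nat \<Rightarrow> nat set) \<Rightarrow> nat \<Rightarrow> bool" where
  "isolated n F u \<longleftrightarrow> (\<forall>v\<in>{..<n}-{u}. F u \<inter> F v = {})"

definition num_isolated :: "nat \<Rightarrow> (nat \<Rightarrow> nat set) \<Rightarrow> real" where
  "num_isolated n F = (\<Sum>u\<in>{..<n}. of_bool (isolated n F u))"

lemma isolated_imp_not_connected:
  assumes "2 \<le> n" "u < n" "isolated n F u"
  shows "\<not> rig_connected n F"
proof
  assume "rig_connected n F"
  define v where "v = (if u = 0 then 1 else 0::nat)"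
  have v: "v < n" "v \<noteq> u" using assms unfolding v_def by auto
  have "(u, v) \<in> (rig_edges n F)\<^sup>*" using \<open>rig_connected n F\<close> v assms unfolding rig_connected_def by auto
  then show False
  proof (cases rule: converse_rtranclE)
    case base then show False using v by simp
  next
    case (step y)
    then have "y < n" "y \<noteq> u" "F u \<inter> F y \<noteq> {}" unfolding rig_edges_def by auto
    then show False using assms(3) unfolding isolated_def by auto
  qed
qed

lemma card_isolated:
  assumes "u < n"
  shows "card {F \<in> rig_space n m k. isolated n F u} = (m choose k) * ((m - k) choose k) ^ (n - 1)"
proof -
  let ?B = "\<lambda>g. {X \<in> k_subsets m k. g u \<inter> X = {}}"
  have eq: "{F \<in> rig_space n m k. isolated n F u}
    = {F \<in> PiE {..<n} (\<lambda>_. k_subsets m k). restrict F {u} \<in> PiE {u} (\<lambda>_. k_subsets m k)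
         \<and> (\<forall>v\<in>{..<n}-{u}. F v \<in> ?B (restrict F {u}))}"
    using assms unfolding rig_space_eq_PiE isolated_def by (auto simp: PiE_iff)
  have "card {F \<in> PiE {..<n} (\<lambda>_. k_subsets m k). restrict F {u} \<in> PiE {u} (\<lambda>_. k_subsets m k)
         \<and> (\<forall>v\<in>{..<n}-{u}. F v \<in> ?B (restrict F {u}))}
     = (\<Sum>g\<in>PiE {u} (\<lambda>_. k_subsets m k). card (?B g) ^ card ({..<n} - {u}))"
    using assms by (intro card_PiE_restrict_in) auto
  also have "\<dots> = (\<Sum>g\<in>PiE {u} (\<lambda>_. k_subsets m k). ((m - k) choose k) ^ (n - 1))"
  proof (rule sum.cong[OF refl])
    fix g assume "g \<in> PiE {u} (\<lambda>_. k_subsets m k)"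
    then have gu: "g u \<subseteq> {..<m}" "card (g u) = k" unfolding k_subsets_def by auto
    show "card (?B g) ^ card ({..<n} - {u}) = ((m - k) choose k) ^ (n - 1)"
      using card_k_subsets_disjoint[OF gu(1), of k] gu(2) assms by simp
  qed
  also have "\<dots> = (m choose k) * ((m - k) choose k) ^ (n - 1)"
    by (simp add: card_PiE card_k_subsets)
  finally show ?thesis using eq by simp
qed

lemma card_disjoint_pairs:
  assumes "u \<noteq> v"
  shows "card {g \<in> PiE {u, v} (\<lambda>_. k_subsets m k). g u \<inter> g v = {}} = (m choose k) * ((m - k) choose k)"
proof -
  let ?B = "\<lambda>g. {X \<in> k_subsets m k. g u \<inter> X = {}}"
  have eq: "{g \<in> PiE {u, v} (\<lambda>_. k_subsets m k). g u \<inter> g v = {}}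
    = {F \<in> PiE {u, v} (\<lambda>_. k_subsets m k). restrict F {u} \<in> PiE {u} (\<lambda>_. k_subsets m k)
         \<and> (\<forall>w\<in>{u, v}-{u}. F w \<in> ?B (restrict F {u}))}"
    using assms by (auto simp: PiE_iff)
  have "card {F \<in> PiE {u, v} (\<lambda>_. k_subsets m k). restrict F {u} \<in> PiE {u} (\<lambda>_. k_subsets m k)
         \<and> (\<forall>w\<in>{u, v}-{u}. F w \<in> ?B (restrict F {u}))}
     = (\<Sum>g\<in>PiE {u} (\<lambda>_. k_subsets m k). card (?B g) ^ card ({u, v} - {u}))"
    by (intro card_PiE_restrict_in) auto
  also have "\<dots> = (\<Sum>g\<in>PiE {u} (\<lambda>_. k_subsets m k). ((m - k) choose k))"
  proof (rule sum.cong[OF refl])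
    fix g assume "g \<in> PiE {u} (\<lambda>_. k_subsets m k)"
    then have gu: "g u \<subseteq> {..<m}" "card (g u) = k" unfolding k_subsets_def by auto
    have "card ({u, v} - {u}) = 1" using assms by auto
    then show "card (?B g) ^ card ({u, v} - {u}) = ((m - k) choose k)"
      using card_k_subsets_disjoint[OF gu(1), of k] gu(2) by simp
  qed
  also have "\<dots> = (m choose k) * ((m - k) choose k)"
    by (simp add: card_PiE card_k_subsets)
  finally show ?thesis using eq by simp
qed

lemma card_two_isolated_le:
  assumes "u < n" "v < n" "u \<noteq> v"
  shows "card {F \<in> rig_space n m k. isolated n F u \<and> isolated n F v}
     \<le> (m choose k) * ((m - k) choose k) * ((m - 2 * k) choose k) ^ (n - 2)"
proof -
  let ?G = "{g \<in> PiE {u, v} (\<lambda>_. k_subsets m k). g u \<inter> g v = {}}"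
  let ?B = "\<lambda>g. {X \<in> k_subsets m k. (g u \<union> g v) \<inter> X = {}}"
  have fin: "finite (PiE {..<n} (\<lambda>_. k_subsets m k))" by (simp add: finite_PiE)
  have sub: "{F \<in> rig_space n m k. isolated n F u \<and> isolated n F v}
    \<subseteq> {F \<in> PiE {..<n} (\<lambda>_. k_subsets m k). restrict F {u, v} \<in> ?G
         \<and> (\<forall>w\<in>{..<n}-{u, v}. F w \<in> ?B (restrict F {u, v}))}"
    using assms unfolding rig_space_eq_PiE isolated_def by (auto simp: PiE_iff)
  have "card {F \<in> rig_space n m k. isolated n F u \<and> isolated n F v}
     \<le> card {F \<in> PiE {..<n} (\<lambda>_. k_subsets m k). restrict F {u, v} \<in> ?G
         \<and> (\<forall>w\<in>{..<n}-{u, v}. F w \<in> ?B (restrict F {u, v}))}"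
    by (rule card_mono[OF finite_subset[OF _ fin] sub]) auto
  also have "\<dots> = (\<Sum>g\<in>?G. card (?B g) ^ card ({..<n} - {u, v}))"
    using assms by (intro card_PiE_restrict_in) auto
  also have "\<dots> = (\<Sum>g\<in>?G. ((m - 2 * k) choose k) ^ (n - 2))"
  proof (rule sum.cong[OF refl])
    fix g assume "g \<in> ?G"
    then have g: "g u \<subseteq> {..<m}" "card (g u) = k" "g v \<subseteq> {..<m}" "card (g v) = k" "g u \<inter> g v = {}"
      unfolding k_subsets_def by auto
    have "card (g u \<union> g v) = 2 * k"
      using g finite_subset[OF g(1)] finite_subset[OF g(3)] by (simp add: card_Un_disjoint)
    moreover have "g u \<union> g v \<subseteq> {..<m}" using g by auto
    moreover have "card ({..<n} - {u, v}) = n - 2" using assms by (simp add: card_Diff_subset)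
    ultimately show "card (?B g) ^ card ({..<n} - {u, v}) = ((m - 2 * k) choose k) ^ (n - 2)"
      using card_k_subsets_disjoint[of "g u \<union> g v" m k] by simp
  qed
  also have "\<dots> = (m choose k) * ((m - k) choose k) * ((m - 2 * k) choose k) ^ (n - 2)"
    using card_disjoint_pairs[OF assms(3), of m k] by simp
  finally show ?thesis .
qed

lemma sum_num_isolated:
  "(\<Sum>F\<in>rig_space n m k. num_isolated n F) = real n * real (m choose k) * real ((m - k) choose k) ^ (n - 1)"
proof -
  have "(\<Sum>F\<in>rig_space n m k. num_isolated n F)
      = (\<Sum>u\<in>{..<n}. \<Sum>F\<in>rig_space n m k. of_bool (isolated n F u))"
    unfolding num_isolated_def by (rule sum.swap)
  also have "\<dots> = (\<Sum>u\<in>{..<n}. real (card {F \<in> rig_space n m k. isolated n F u}))"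
    by (intro sum.cong refl) (simp add: Int_def)
  also have "\<dots> = (\<Sum>u\<in>{..<n}. real (m choose k) * real ((m - k) choose k) ^ (n - 1))"
    by (intro sum.cong refl) (simp add: card_isolated)
  finally show ?thesis by simp
qed

lemma sum_num_isolated_sq_le:
  "(\<Sum>F\<in>rig_space n m k. (num_isolated n F)\<^sup>2)
    \<le> real n * real (m choose k) * real ((m - k) choose k) ^ (n - 1)
      + real n * (real n - 1) * (real (m choose k) * real ((m - k) choose k) * real ((m - 2 * k) choose k) ^ (n - 2))"
proof -
  let ?Om = "rig_space n m k"
  let ?c1 = "real (m choose k) * real ((m - k) choose k) ^ (n - 1)"
  let ?c2 = "real (m choose k) * real ((m - k) choose k) * real ((m - 2 * k) choose k) ^ (n - 2)"
  have sq: "\<And>F. (num_isolated n F)\<^sup>2 = (\<Sum>u\<in>{..<n}. \<Sum>v\<in>{..<n}. of_bool (isolated n F u \<and> isolated n F v))"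
    unfolding num_isolated_def power2_eq_square sum_product by (simp add: of_bool_conj)
  have "(\<Sum>F\<in>?Om. (num_isolated n F)\<^sup>2)
      = (\<Sum>u\<in>{..<n}. \<Sum>F\<in>?Om. \<Sum>v\<in>{..<n}. of_bool (isolated n F u \<and> isolated n F v))"
    unfolding sq by (rule sum.swap)
  also have "\<dots> = (\<Sum>u\<in>{..<n}. \<Sum>v\<in>{..<n}. \<Sum>F\<in>?Om. of_bool (isolated n F u \<and> isolated n F v))"
    by (intro sum.cong refl sum.swap)
  also have "\<dots> = (\<Sum>u\<in>{..<n}. \<Sum>v\<in>{..<n}. real (card {F \<in> ?Om. isolated n F u \<and> isolated n F v}))"
    by (intro sum.cong refl) (simp add: Int_def)
  also have "\<dots> \<le> (\<Sum>u\<in>{..<n}. ?c1 + (real n - 1) * ?c2)"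
  proof (rule sum_mono)
    fix u assume u: "u \<in> {..<n}"
    have split: "(\<Sum>v\<in>{..<n}. real (card {F \<in> ?Om. isolated n F u \<and> isolated n F v}))
       = real (card {F \<in> ?Om. isolated n F u \<and> isolated n F u})
         + (\<Sum>v\<in>{..<n}-{u}. real (card {F \<in> ?Om. isolated n F u \<and> isolated n F v}))"
      using u by (subst sum.remove[of _ u]) auto
    have diag: "real (card {F \<in> ?Om. isolated n F u \<and> isolated n F u}) = ?c1"
      using card_isolated[of u n m k] u by simp
    have off_diag: "(\<Sum>v\<in>{..<n}-{u}. real (card {F \<in> ?Om. isolated n F u \<and> isolated n F v}))
        \<le> (\<Sum>v\<in>{..<n}-{u}. ?c2)"
    proof (rule sum_mono)
      fix v assume "v \<in> {..<n}-{u}"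
      then have "card {F \<in> ?Om. isolated n F u \<and> isolated n F v}
          \<le> (m choose k) * ((m - k) choose k) * ((m - 2 * k) choose k) ^ (n - 2)"
        using u by (intro card_two_isolated_le) auto
      then show "real (card {F \<in> ?Om. isolated n F u \<and> isolated n F v}) \<le> ?c2"
        by (simp only: of_nat_mult[symmetric] of_nat_power[symmetric] of_nat_le_iff)
    qed
    have "(\<Sum>v\<in>{..<n}-{u}. ?c2) = (real n - 1) * ?c2"
      using u by (simp add: card_Diff_subset of_nat_diff)
    then show "(\<Sum>v\<in>{..<n}. real (card {F \<in> ?Om. isolated n F u \<and> isolated n F v})) \<le> ?c1 + (real n - 1) * ?c2"
      using split diag off_diag by linarith
  qed
  also have "\<dots> = real n * ?c1 + real n * (real n - 1) * ?c2" by (simp add: distrib_left mult.assoc)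
  finally show ?thesis by (simp add: mult.assoc)
qed

lemma card_zero_le_second_moment:
  fixes X :: "'a \<Rightarrow> real"
  assumes fin: "finite A" and "card A > 0" and "(\<Sum>x\<in>A. X x) > 0"
  shows "real (card {x \<in> A. X x = 0}) / real (card A)
     \<le> ((\<Sum>x\<in>A. (X x)\<^sup>2) / real (card A) - ((\<Sum>x\<in>A. X x) / real (card A))\<^sup>2)
        / ((\<Sum>x\<in>A. X x) / real (card A))\<^sup>2"
proof -
  define N where "N = real (card A)"
  define S1 where "S1 = (\<Sum>x\<in>A. X x)"
  define S2 where "S2 = (\<Sum>x\<in>A. (X x)\<^sup>2)"
  define \<mu> where "\<mu> = S1 / N"
  have N_pos: "N > 0" using assms unfolding N_def by simp
  have \<mu>_pos: "\<mu> > 0" using assms N_pos unfolding \<mu>_def S1_def by simp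
  have "(\<Sum>x\<in>A. (X x - \<mu>)\<^sup>2) = (\<Sum>x\<in>A. (X x)\<^sup>2 - (2 * \<mu>) * X x + \<mu>\<^sup>2)"
    by (intro sum.cong refl) (simp add: power2_diff)
  also have "\<dots> = S2 - 2 * \<mu> * S1 + N * \<mu>\<^sup>2"
    unfolding S1_def S2_def N_def
    by (simp only: sum.distrib sum_subtractf sum_distrib_left[symmetric] sum_constant of_nat_id)
  also have "\<dots> = S2 - N * \<mu>\<^sup>2" unfolding \<mu>_def using N_pos by (simp add: power2_eq_square field_simps)
  finally have var: "(\<Sum>x\<in>A. (X x - \<mu>)\<^sup>2) = S2 - N * \<mu>\<^sup>2" .
  have "real (card {x \<in> A. X x = 0}) * \<mu>\<^sup>2 = (\<Sum>x\<in>{x \<in> A. X x = 0}. (X x - \<mu>)\<^sup>2)"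
    by simp
  also have "\<dots> \<le> (\<Sum>x\<in>A. (X x - \<mu>)\<^sup>2)"
    by (rule sum_mono2[OF fin]) auto
  finally have "real (card {x \<in> A. X x = 0}) * \<mu>\<^sup>2 \<le> S2 - N * \<mu>\<^sup>2" using var by simp
  then have "real (card {x \<in> A. X x = 0}) / N \<le> (S2 - N * \<mu>\<^sup>2) / (N * \<mu>\<^sup>2)"
    using N_pos \<mu>_pos by (simp add: field_simps)
  also have "\<dots> = (S2 / N - \<mu>\<^sup>2) / \<mu>\<^sup>2" using N_pos \<mu>_pos by (simp add: field_simps)
  finally show ?thesis unfolding N_def S1_def S2_def \<mu>_def .
qed

lemma rig_prob_disconnected_ge_isolated:
  assumes "2 \<le> n" "k \<le> m"
  shows "1 - real (card {F \<in> rig_space n m k. num_isolated n F = 0}) / real (card (rig_space n m k))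
     \<le> rig_prob n m k (\<lambda>F. \<not> rig_connected n F)"
proof -
  let ?Om = "rig_space n m k"
  let ?N = "real (card ?Om)"
  have ne: "?Om \<noteq> {}" using assms(2) by (rule rig_space_nonempty)
  have sub: "?Om - {F \<in> ?Om. num_isolated n F = 0} \<subseteq> {F \<in> ?Om. \<not> rig_connected n F}"
  proof
    fix F assume F: "F \<in> ?Om - {F \<in> ?Om. num_isolated n F = 0}"
    then obtain u where "u < n" "isolated n F u"
      unfolding num_isolated_def by (auto intro: ccontr)
    then show "F \<in> {F \<in> ?Om. \<not> rig_connected n F}"
      using F isolated_imp_not_connected[OF assms(1)] by auto
  qed
  have "card ?Om - card {F \<in> ?Om. num_isolated n F = 0} \<le> card {F \<in> ?Om. \<not> rig_connected n F}"
    using card_mono[OF _ sub] card_Diff_subset[of "{F \<in> ?Om. num_isolated n F = 0}" ?Om] by fastforce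
  then have "card ?Om \<le> card {F \<in> ?Om. \<not> rig_connected n F} + card {F \<in> ?Om. num_isolated n F = 0}"
    by arith
  then have "?N - real (card {F \<in> ?Om. num_isolated n F = 0}) \<le> real (card {F \<in> ?Om. \<not> rig_connected n F})"
    by (simp flip: of_nat_add)
  then have "(?N - real (card {F \<in> ?Om. num_isolated n F = 0})) / ?N
      \<le> real (card {F \<in> ?Om. \<not> rig_connected n F}) / ?N"
    by (simp add: divide_right_mono)
  then show ?thesis
    unfolding rig_prob_def using ne by (simp add: diff_divide_distrib)
qed

lemma mean_num_isolated:
  assumes "1 \<le> n" "k \<le> m"
  shows "(\<Sum>F\<in>rig_space n m k. num_isolated n F) / real (card (rig_space n m k))
     = real n * (real ((m - k) choose k) / real (m choose k)) ^ (n - 1)"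
proof -
  let ?C = "real (m choose k)"
  have "?C > 0" using assms by simp
  moreover have "?C ^ n = ?C * ?C ^ (n - 1)" using assms by (cases n) simp_all
  ultimately show ?thesis
    unfolding sum_num_isolated card_rig_space by (simp add: power_divide field_simps)
qed

lemma second_moment_num_isolated_le:
  assumes "2 \<le> n" "k \<le> m"
  defines "q1 \<equiv> real ((m - k) choose k) / real (m choose k)"
      and "q2 \<equiv> real ((m - 2 * k) choose k) / real (m choose k)"
  shows "(\<Sum>F\<in>rig_space n m k. (num_isolated n F)\<^sup>2) / real (card (rig_space n m k))
     \<le> real n * q1 ^ (n - 1) + real n * (real n - 1) * (q1 * q2 ^ (n - 2))"
proof -
  let ?C = "real (m choose k)"
  have C_pos: "?C > 0" using assms by simp
  have pow1: "?C ^ n = ?C * ?C ^ (n - 1)" and pow2: "?C ^ n = ?C * ?C * ?C ^ (n - 2)"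
    using assms(1) by (cases n; cases "n - 1"; simp)+
  have "(\<Sum>F\<in>rig_space n m k. (num_isolated n F)\<^sup>2) / ?C ^ n
      \<le> (real n * ?C * real ((m - k) choose k) ^ (n - 1)
         + real n * (real n - 1) * (?C * real ((m - k) choose k) * real ((m - 2 * k) choose k) ^ (n - 2))) / ?C ^ n"
    using sum_num_isolated_sq_le[of n m k] C_pos by (simp add: divide_right_mono)
  also have "\<dots> = real n * ?C * real ((m - k) choose k) ^ (n - 1) / ?C ^ n
      + real n * (real n - 1) * (?C * real ((m - k) choose k) * real ((m - 2 * k) choose k) ^ (n - 2)) / ?C ^ n"
    by (simp add: add_divide_distrib)
  also have "real n * ?C * real ((m - k) choose k) ^ (n - 1) / ?C ^ n = real n * q1 ^ (n - 1)"
    unfolding q1_def pow1 using C_pos by (simp add: power_divide field_simps)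
  also have "real n * (real n - 1) * (?C * real ((m - k) choose k) * real ((m - 2 * k) choose k) ^ (n - 2)) / ?C ^ n
      = real n * (real n - 1) * (q1 * q2 ^ (n - 2))"
    unfolding q1_def q2_def pow2 using C_pos by (simp add: power_divide field_simps)
  finally show ?thesis by (simp add: card_rig_space)
qed

lemma rig_prob_disconnected_ge_second_moment:
  assumes n2: "2 \<le> n" and km: "k \<le> m" and avoid_pos: "(m - k) choose k > 0"
  defines "q1 \<equiv> real ((m - k) choose k) / real (m choose k)"
      and "q2 \<equiv> real ((m - 2 * k) choose k) / real (m choose k)"
  defines "\<mu> \<equiv> real n * q1 ^ (n - 1)"
  shows "rig_prob n m k (\<lambda>F. \<not> rig_connected n F)
     \<ge> 1 - ((\<mu> + real n * (real n - 1) * (q1 * q2 ^ (n - 2))) - \<mu>\<^sup>2) / \<mu>\<^sup>2"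
proof -
  let ?Om = "rig_space n m k"
  let ?N = "real (card ?Om)"
  have ne: "?Om \<noteq> {}" using km by (rule rig_space_nonempty)
  then have card_pos: "card ?Om > 0" by (simp add: card_gt_0_iff)
  have mean: "(\<Sum>F\<in>?Om. num_isolated n F) / ?N = \<mu>"
    unfolding \<mu>_def q1_def using n2 km by (intro mean_num_isolated) simp_all
  have "\<mu> > 0" unfolding \<mu>_def q1_def using avoid_pos km n2 by simp
  moreover have "(\<Sum>F\<in>?Om. num_isolated n F) = \<mu> * ?N" using mean ne by (simp add: field_simps)
  ultimately have sum_pos: "(\<Sum>F\<in>?Om. num_isolated n F) > 0"
    using card_pos by simp
  have "real (card {F \<in> ?Om. num_isolated n F = 0}) / ?N
      \<le> ((\<Sum>F\<in>?Om. (num_isolated n F)\<^sup>2) / ?N - ((\<Sum>F\<in>?Om. num_isolated n F) / ?N)\<^sup>2)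
         / ((\<Sum>F\<in>?Om. num_isolated n F) / ?N)\<^sup>2"
    by (rule card_zero_le_second_moment[OF finite_rig_space card_pos sum_pos])
  also have "\<dots> \<le> (\<mu> + real n * (real n - 1) * (q1 * q2 ^ (n - 2)) - \<mu>\<^sup>2) / \<mu>\<^sup>2"
    unfolding mean \<mu>_def q1_def q2_def using second_moment_num_isolated_le[OF n2 km]
    by (simp add: divide_right_mono)
  finally show ?thesis
    using rig_prob_disconnected_ge_isolated[OF n2 km] by linarith
qed

subsection \<open>Binomial estimates\<close>

lemma Suc_times_binomial_diff: "Suc j * (a choose Suc j) = (a - j) * (a choose j)"
  by (simp only: binomial_absorption binomial_absorb_comp)

lemma of_nat_binomial_Suc:
  "real (a choose Suc j) = real (a - j) * real (a choose j) / real (Suc j)"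
proof -
  have "real (Suc j) * real (a choose Suc j) = real (a - j) * real (a choose j)"
    using Suc_times_binomial_diff[of j a] by (metis of_nat_mult)
  then show ?thesis by (simp add: field_simps)
qed

lemma binomial_mult_power_le:
  assumes "a \<le> m"
  shows "real (a choose j) * real m ^ j \<le> real (m choose j) * real a ^ j"
proof (induction j)
  case 0 then show ?case by simp
next
  case (Suc j)
  show ?case
  proof (cases "j < a")
    case False
    then show ?thesis by (simp add: binomial_eq_0)
  next
    case True
    have ra: "real (a - j) = real a - real j" using True by simp
    have rm: "real (m - j) = real m - real j" using True assms by simp
    have key: "(real a - real j) * real m \<le> (real m - real j) * real a"
    proof -
      have "real a * real j \<le> real m * real j" using assms by (intro mult_right_mono) simp_all
      then show ?thesis by (simp add: algebra_simps)
    qed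
    have nn: "(real a - real j) * real m \<ge> 0" using True by simp
    have "real (a choose Suc j) * real m ^ Suc j
        = ((real a - real j) * real m) * (real (a choose j) * real m ^ j) / real (Suc j)"
      unfolding of_nat_binomial_Suc ra by (simp add: field_simps)
    also have "\<dots> \<le> ((real a - real j) * real m) * (real (m choose j) * real a ^ j) / real (Suc j)"
      by (intro divide_right_mono mult_left_mono Suc.IH nn) simp
    also have "\<dots> \<le> ((real m - real j) * real a) * (real (m choose j) * real a ^ j) / real (Suc j)"
      by (intro divide_right_mono mult_right_mono key) simp_all
    also have "\<dots> = real (m choose Suc j) * real a ^ Suc j"
      unfolding of_nat_binomial_Suc[of m j] rm by (simp add: field_simps)
    finally show ?thesis .
  qed
qed

lemma binomial_ratio_le_power:
  assumes "a \<le> m" "k \<le> m"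
  shows "real (a choose k) / real (m choose k) \<le> (real a / real m) ^ k"
proof (cases "m = 0")
  case True then show ?thesis using assms by simp
next
  case False
  have m_pos: "real m > 0" using False by simp
  have C_pos: "real (m choose k) > 0" using assms by simp
  show ?thesis using binomial_mult_power_le[OF assms(1), of k] m_pos C_pos
    by (simp add: power_divide divide_simps mult.commute)
qed

lemma binomial_mult_power_ge:
  assumes "d + k \<le> m" "j \<le> k"
  shows "real (m choose j) * (real m - real d - real k + 1) ^ j \<le> real ((m - d) choose j) * (real m - real k + 1) ^ j"
  using assms(2)
proof (induction j)
  case 0 then show ?case by simp
next
  case (Suc j)
  have jk: "j < k" using Suc by simp
  have r1: "real (m - j) = real m - real j" using jk assms by simp
  have r2: "real (m - d - j) = real m - real d - real j" using jk assms by simp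
  have key: "(real m - real j) * (real m - real d - real k + 1) \<le> (real m - real d - real j) * (real m - real k + 1)"
  proof -
    have "(real m - real j) * (real m - real d - real k + 1) - (real m - real d - real j) * (real m - real k + 1)
        = real d * (real j - real k + 1)" by (simp add: algebra_simps)
    moreover have "real d * (real j - real k + 1) \<le> 0" using jk by (simp add: mult_nonneg_nonpos)
    ultimately show ?thesis by linarith
  qed
  have nn1: "(real m - real j) * (real m - real d - real k + 1) \<ge> 0" using jk assms by simp
  have nn2: "real m - real k + 1 \<ge> 0" using assms by simp
  have "real (m choose Suc j) * (real m - real d - real k + 1) ^ Suc j
      = ((real m - real j) * (real m - real d - real k + 1)) * (real (m choose j) * (real m - real d - real k + 1) ^ j) / real (Suc j)"
    unfolding of_nat_binomial_Suc r1 by (simp add: field_simps)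
  also have "\<dots> \<le> ((real m - real j) * (real m - real d - real k + 1)) * (real ((m - d) choose j) * (real m - real k + 1) ^ j) / real (Suc j)"
    using Suc jk by (intro divide_right_mono mult_left_mono nn1) simp_all
  also have "\<dots> \<le> ((real m - real d - real j) * (real m - real k + 1)) * (real ((m - d) choose j) * (real m - real k + 1) ^ j) / real (Suc j)"
    using nn2 by (intro divide_right_mono mult_right_mono key) simp_all
  also have "\<dots> = real ((m - d) choose Suc j) * (real m - real k + 1) ^ Suc j"
    unfolding of_nat_binomial_Suc[of "m - d" j] r2 by (simp add: field_simps)
  finally show ?case .
qed

lemma binomial_diff_sq_le:
  assumes "2 * d \<le> m"
  shows "real ((m - 2 * d) choose j) * real (m choose j) \<le> real ((m - d) choose j) ^ 2"
proof (induction j)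
  case 0 then show ?case by simp
next
  case (Suc j)
  show ?case
  proof (cases "j < m - 2 * d")
    case False
    then show ?thesis by (simp add: binomial_eq_0)
  next
    case True
    have r1: "real (m - 2 * d - j) = real m - 2 * real d - real j" using True assms by simp
    have r2: "real (m - j) = real m - real j" using True assms by simp
    have r3: "real (m - d - j) = real m - real d - real j" using True assms by simp
    have key: "(real m - 2 * real d - real j) * (real m - real j) \<le> (real m - real d - real j)\<^sup>2"
    proof -
      have "(real m - real d - real j)\<^sup>2 - (real m - 2 * real d - real j) * (real m - real j) = (real d)\<^sup>2"
        by (simp add: algebra_simps power2_eq_square)
      then show ?thesis by (smt (verit) zero_le_power2)
    qed
    have nn: "(real m - 2 * real d - real j) * (real m - real j) \<ge> 0" using True assms by simp
    have "real ((m - 2 * d) choose Suc j) * real (m choose Suc j)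
        = ((real m - 2 * real d - real j) * (real m - real j)) * (real ((m - 2 * d) choose j) * real (m choose j)) / (real (Suc j))\<^sup>2"
      unfolding of_nat_binomial_Suc r1 r2 by (simp add: field_simps power2_eq_square)
    also have "\<dots> \<le> ((real m - 2 * real d - real j) * (real m - real j)) * (real ((m - d) choose j) ^ 2) / (real (Suc j))\<^sup>2"
      by (intro divide_right_mono mult_left_mono Suc.IH nn) simp
    also have "\<dots> \<le> (real m - real d - real j)\<^sup>2 * (real ((m - d) choose j) ^ 2) / (real (Suc j))\<^sup>2"
      by (intro divide_right_mono mult_right_mono key) simp_all
    also have "\<dots> = real ((m - d) choose Suc j) ^ 2"
      unfolding of_nat_binomial_Suc[of "m - d" j] r3 by (simp add: field_simps power2_eq_square)
    finally show ?thesis .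
  qed
qed

lemma power_div_fact_le_exp:
  fixes x :: real
  assumes "0 \<le> x"
  shows "x ^ t / fact t \<le> exp x"
proof -
  have "x ^ t / fact t = (\<Sum>n\<in>{t}. x ^ n / fact n)" by simp
  also have "\<dots> \<le> (\<Sum>n. x ^ n / fact n)"
    using assms summable_exp_generic[of x] by (intro sum_le_suminf) (auto simp: divide_inverse ac_simps)
  also have "\<dots> = exp x" by (simp add: exp_def divide_inverse ac_simps)
  finally show ?thesis .
qed

lemma binomial_le_exp_power:
  assumes "t \<ge> 1"
  shows "real (m choose t) \<le> (exp 1 * real m / real t) ^ t"
proof -
  have t_pos: "real t > 0" using assms by simp
  have "real (m choose t) * real t ^ t \<le> real (m choose t) * (fact t * exp (real t))"
    using power_div_fact_le_exp[of "real t" t] by (intro mult_left_mono) (simp_all add: field_simps)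
  also have "\<dots> = (real (m choose t) * fact t) * exp (real t)" by simp
  also have "\<dots> \<le> real m ^ t * exp (real t)"
    using binomial_fact_pow[of m t]
    by (intro mult_right_mono) (metis of_nat_fact of_nat_le_iff of_nat_mult of_nat_power, simp)
  finally have "real (m choose t) * real t ^ t \<le> real m ^ t * exp (real t)" .
  moreover have "(exp 1 * real m / real t) ^ t = real m ^ t * exp (real t) / real t ^ t"
    by (simp add: power_divide power_mult_distrib mult.commute flip: exp_of_nat_mult)
  ultimately show ?thesis using t_pos by (simp only: pos_le_divide_eq zero_less_power)
qed

lemma power_eq_exp_ln: "0 < (x::real) \<Longrightarrow> x ^ n = exp (real n * ln x)"
  by (simp add: exp_of_nat_mult)

lemma sum_power_atLeast1_le:
  fixes a :: real
  assumes "0 \<le> a" "a \<le> 1/2"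
  shows "(\<Sum>s\<in>{1..N}. a ^ s) \<le> 2 * a"
proof -
  have "(\<Sum>s\<in>{1..N}. a ^ s) = (\<Sum>i<N. a ^ Suc i)"
    using sum.atLeast1_atMost_eq[of "\<lambda>s. a ^ s" N] by simp
  also have "\<dots> = a * (\<Sum>i<N. a ^ i)" by (simp add: sum_distrib_left)
  finally have e: "(\<Sum>s\<in>{1..N}. a ^ s) = a * (\<Sum>i<N. a ^ i)" .
  have "(\<Sum>i<N. a ^ i) = (1 - a ^ N) / (1 - a)" using assms by (simp add: sum_gp_strict)
  also have "\<dots> \<le> 1 / (1 - a)" using assms by (intro divide_right_mono) simp_all
  also have "\<dots> \<le> 2" using assms by (simp add: field_simps)
  finally have "(\<Sum>i<N. a ^ i) \<le> 2" .
  then show ?thesis unfolding e using assms by (simp add: mult_left_mono mult.commute)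
qed

lemma binomial_le_exp_entropy:
  assumes "1 \<le> s" "1 \<le> n"
  shows "real (n choose s) \<le> exp (real s * (1 + ln (real n / real s)))"
proof -
  have pos: "exp 1 * real n / real s > 0" using assms by simp
  have "real (n choose s) \<le> (exp 1 * real n / real s) ^ s" by (rule binomial_le_exp_power[OF assms(1)])
  also have "\<dots> = exp (real s * ln (exp 1 * real n / real s))"
    using pos by (rule power_eq_exp_ln)
  also have "ln (exp 1 * real n / real s) = 1 + ln (real n / real s)"
    using assms by (simp add: ln_mult ln_div)
  finally show ?thesis .
qed

lemma binomial_le_exp_ln:
  assumes "1 \<le> n"
  shows "real (n choose s) \<le> exp (real s * ln (real n))"
proof (cases "s \<le> n")
  case True
  have "real (n choose s) \<le> real n ^ s" using binomial_le_pow[OF True] by (metis of_nat_le_iff of_nat_power)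
  also have "\<dots> = exp (real s * ln (real n))" using assms by (intro power_eq_exp_ln) simp
  finally show ?thesis .
next
  case False then show ?thesis by (simp add: binomial_eq_0)
qed

lemma binomial_le_exp_ln2: "real (n choose s) \<le> exp (real n * ln 2)"
proof -
  have "real (n choose s) \<le> 2 ^ n" using binomial_le_pow2[of n s] by (metis of_nat_le_iff of_nat_numeral of_nat_power)
  also have "(2::real) ^ n = exp (real n * ln 2)" by (rule power_eq_exp_ln) simp
  finally show ?thesis .
qed

lemma binomial_ratio_le_exp:
  assumes "k \<le> m" "t \<le> m" "0 < m"
  shows "real ((m - t) choose k) / real (m choose k) \<le> exp (- real k * real t / real m)"
proof -
  have "real ((m - t) choose k) / real (m choose k) \<le> (real (m - t) / real m) ^ k"
    using binomial_ratio_le_power[of "m - t" m k] assms by simp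
  also have "real (m - t) / real m = 1 + (- real t / real m)" using assms by (simp add: field_simps)
  also have "(1 + (- real t / real m)) ^ k \<le> exp (- real t / real m) ^ k"
  proof (intro power_mono)
    show "1 + - real t / real m \<le> exp (- real t / real m)" by (rule exp_ge_add_one_self)
    show "0 \<le> 1 + - real t / real m" using assms by (simp add: field_simps)
  qed
  also have "\<dots> = exp (- real k * real t / real m)" by (simp add: exp_of_nat_mult[symmetric])
  finally show ?thesis .
qed

lemma binomial_ratio_power_le_exp:
  assumes "k \<le> m" "t \<le> m" "0 < m"
  shows "(real ((m - t) choose k) / real (m choose k)) ^ r \<le> exp (- real k * real t * real r / real m)"
proof -
  have "(real ((m - t) choose k) / real (m choose k)) ^ r \<le> exp (- real k * real t / real m) ^ r"
    by (intro power_mono binomial_ratio_le_exp assms) simp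
  also have "\<dots> = exp (- real k * real t * real r / real m)" by (simp add: exp_of_nat_mult[symmetric] mult_ac)
  finally show ?thesis .
qed

lemma ln_le_2_sqrt: "0 < x \<Longrightarrow> ln x \<le> 2 * sqrt x"
proof -
  assume x: "0 < x"
  have "ln (sqrt x) \<le> sqrt x - 1" using x by (intro ln_le_minus_one) simp
  then show ?thesis using x by (simp add: ln_sqrt)
qed

lemma one_plus_2_ln_le_half: "100 \<le> (K::real) \<Longrightarrow> 1 + 2 * ln K \<le> K / 2"
proof -
  assume K: "100 \<le> K"
  have "ln K \<le> 2 * sqrt K" using K by (intro ln_le_2_sqrt) simp
  moreover have "sqrt K \<ge> 10" using K real_sqrt_le_mono[of 100 K] by simp
  moreover have "sqrt K * sqrt K = K" using K by simp
  moreover have "10 * sqrt K \<le> sqrt K * sqrt K"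
    using \<open>sqrt K \<ge> 10\<close> K by (intro mult_right_mono) simp_all
  ultimately show ?thesis by linarith
qed

lemma mult_le_exp_add:
  fixes A B a b :: real
  assumes "0 \<le> A" "A \<le> exp a" "0 \<le> B" "B \<le> exp b" "a + b \<le> c"
  shows "A * B \<le> exp c"
proof -
  have "A * B \<le> exp a * exp b" using assms by (intro mult_mono) simp_all
  also have "\<dots> = exp (a + b)" by (simp add: exp_add)
  also have "\<dots> \<le> exp c" using assms by simp
  finally show ?thesis .
qed

subsection \<open>Estimates for small and large separated sets\<close>

lemma spread_exponent_ge:
  fixes N M K S T c \<delta> L :: real
  assumes "0 < N" "0 < M" "0 \<le> K" "0 \<le> S" "S \<le> N" "0 \<le> c"
    and T: "c * K * S \<le> T" and hyp: "(1 + \<delta>) * M * L \<le> K\<^sup>2 * N"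
  shows "c * (1 + \<delta>) * ((N - S) / N) * (S * L) \<le> K * T * (N - S) / M"
proof -
  have w_nn: "0 \<le> c * S * ((N - S) / N)" using assms by simp
  have "(1 + \<delta>) * L \<le> K\<^sup>2 * N / M" using hyp assms by (simp add: field_simps mult.commute)
  then have "c * S * ((N - S) / N) * ((1 + \<delta>) * L) \<le> c * S * ((N - S) / N) * (K\<^sup>2 * N / M)"
    using w_nn by (rule mult_left_mono)
  also have "\<dots> = K * (c * K * S) * (N - S) / M"
    using assms by (simp add: power2_eq_square field_simps)
  also have "\<dots> \<le> K * T * (N - S) / M"
    using T assms by (intro divide_right_mono mult_right_mono mult_left_mono) simp_all
  finally show ?thesis by (simp add: mult_ac)
qed

lemma spread_bound_small_cut:
  fixes n m k s t :: nat and \<delta> :: real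
  assumes \<delta>: "0 < \<delta>" "\<delta> \<le> 1"
    and hyp: "(1 + \<delta>) * real m * ln (real n) \<le> (real k)\<^sup>2 * real n"
    and n2: "2 \<le> n" and mn: "n \<le> m" and km: "k \<le> m"
    and s1: "1 \<le> s" and sn: "2 * s \<le> n" and tm: "t \<le> m"
    and t_ge: "(1 - \<delta>/4) * real k * real s \<le> real t"
    and n_large: "ln (8 * exp 1 / \<delta>) \<le> 3/8 * ln (real n)"
  shows "spread_bound n m k s t \<le> exp (- (\<delta>/8) * real s * ln (real n))"
proof -
  define N M K S where "N = real n" "M = real m" "K = real k" "S = real s"
  define L where "L = ln N"
  define E where "E = K * real t * (N - S) / M"
  have N_pos: "N \<ge> 2" and M_pos: "M > 0" and S_pos: "S \<ge> 1" and SN: "2 * S \<le> N"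
    using n2 mn s1 sn unfolding N_M_K_S_def L_def by simp_all
  have L_pos: "L > 0" unfolding N_M_K_S_def L_def using n2 by simp
  have SL_pos: "S * L > 0" using S_pos L_pos by simp
  have avoid: "(real ((m - t) choose k) / real (m choose k)) ^ (n - s) \<le> exp (- E)"
    using binomial_ratio_power_le_exp[OF km tm, of "n - s"] M_pos sn unfolding E_def N_M_K_S_def L_def by simp
  have E_ge: "(1 - \<delta>/4) * (1 + \<delta>) * ((N - S) / N) * (S * L) \<le> E"
    unfolding E_def using hyp t_ge \<delta> N_pos M_pos S_pos SN
    by (intro spread_exponent_ge) (simp_all add: N_M_K_S_def L_def)
  have coeff_nn: "0 \<le> (1 - \<delta>/4) * (1 + \<delta>)" using \<delta> by simp
  show ?thesis
  proof (cases "S \<le> \<delta> * N / 8")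
    case True
    have "1 + \<delta>/4 \<le> (1 - \<delta>/4) * (1 + \<delta>) * (1 - \<delta>/8)"
    proof -
      have "(1 - \<delta>/4) * (1 + \<delta>) * (1 - \<delta>/8) - (1 + \<delta>/4) = \<delta> * (3/8 - 11 * \<delta> / 32 + \<delta>\<^sup>2 / 32)"
        by (simp add: field_simps power2_eq_square)
      moreover have "\<delta> * (3/8 - 11 * \<delta> / 32 + \<delta>\<^sup>2 / 32) \<ge> 0" using \<delta> by simp
      ultimately show ?thesis by linarith
    qed
    also have "\<dots> \<le> (1 - \<delta>/4) * (1 + \<delta>) * ((N - S) / N)"
      using True N_pos coeff_nn by (intro mult_left_mono) (simp_all add: field_simps)
    finally have "(1 + \<delta>/4) * (S * L) \<le> E"
      using E_ge SL_pos by (meson mult_right_mono less_imp_le order_trans)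
    moreover have "(\<delta>/8) * (S * L) \<le> (\<delta>/4) * (S * L)" using SL_pos \<delta> by (intro mult_right_mono) simp_all
    ultimately have exponent: "S * L + - E \<le> - (\<delta>/8) * S * L" by (simp add: algebra_simps)
    have "real (n choose s) \<le> exp (S * L)"
      using binomial_le_exp_ln[of n s] n2 unfolding N_M_K_S_def L_def by simp
    then show ?thesis
      unfolding spread_bound_def N_M_K_S_def[symmetric] L_def[symmetric]
      by (intro mult_le_exp_add[OF _ _ _ avoid exponent]) simp_all
  next
    case False
    have "1/2 \<le> (1 - \<delta>/4) * (1 + \<delta>) * (1/2)" using \<delta> by (simp add: field_simps)
    also have "\<dots> \<le> (1 - \<delta>/4) * (1 + \<delta>) * ((N - S) / N)"
      using SN N_pos coeff_nn by (intro mult_left_mono) (simp_all add: field_simps)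
    finally have "1/2 * (S * L) \<le> E"
      using E_ge SL_pos by (meson mult_right_mono less_imp_le order_trans)
    moreover have "(\<delta>/8) * (S * L) \<le> (1/8) * (S * L)" using SL_pos \<delta> by (intro mult_right_mono) simp_all
    ultimately have exponent: "S * (3/8 * L) + - E \<le> - (\<delta>/8) * S * L" by (simp add: algebra_simps)
    have "1 + ln (N / S) \<le> 3/8 * L"
    proof -
      have "ln (N / S) \<le> ln (8 / \<delta>)" using False N_pos S_pos \<delta> by (intro ln_mono) (simp_all add: field_simps)
      then show ?thesis using n_large \<delta> unfolding N_M_K_S_def L_def by (simp add: ln_div ln_mult)
    qed
    then have "exp (S * (1 + ln (N / S))) \<le> exp (S * (3/8 * L))"
      using S_pos by (simp add: mult_left_mono)
    moreover have "real (n choose s) \<le> exp (S * (1 + ln (N / S)))"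
      using binomial_le_exp_entropy[of s n] n2 s1 unfolding N_M_K_S_def by simp
    ultimately have "real (n choose s) \<le> exp (S * (3/8 * L))" by linarith
    then show ?thesis
      unfolding spread_bound_def N_M_K_S_def[symmetric] L_def[symmetric]
      by (intro mult_le_exp_add[OF _ _ _ avoid exponent]) simp_all
  qed
qed

lemma confined_colour_factor_le:
  fixes m k s t :: nat
  assumes t1: "1 \<le> t" and tks: "t \<le> k * s" and tm: "t \<le> m" and km: "k \<le> m"
  shows "real (m choose t) * (real (t choose k) / real (m choose k)) ^ s
       \<le> exp (real t + (real k * real s - real t) * ln (real t / real m))"
proof -
  define M T where "M = real m" "T = real t"
  have T_pos: "T \<ge> 1" using t1 unfolding M_T_def by simp
  have M_pos: "M > 0" using t1 tm unfolding M_T_def by simp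
  have ratio_le: "real (t choose k) / real (m choose k) \<le> (T / M) ^ k"
    using binomial_ratio_le_power[OF tm km] unfolding M_T_def by simp
  have factor_le: "real (m choose t) * (real (t choose k) / real (m choose k)) ^ s
      \<le> (exp 1 * M / T) ^ t * ((T / M) ^ k) ^ s"
    using binomial_le_exp_power[OF t1, of m] ratio_le unfolding M_T_def
    by (intro mult_mono power_mono) simp_all
  have factor_eq: "(exp 1 * M / T) ^ t * ((T / M) ^ k) ^ s = exp T * (T / M) ^ (k * s - t)"
  proof -
    have exp_t: "exp 1 ^ t = exp T" using exp_of_nat_mult[of t "1::real"] unfolding M_T_def by simp
    have "((T / M) ^ k) ^ s = (T / M) ^ t * (T / M) ^ (k * s - t)"
      using tks by (simp add: power_mult[symmetric] power_add[symmetric])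
    moreover have "(exp 1 * M / T) ^ t * (T / M) ^ t = exp 1 ^ t"
    proof -
      have cancel: "exp 1 * M / T * (T / M) = exp 1" using M_pos T_pos by (simp add: field_simps)
      show ?thesis by (simp only: power_mult_distrib[symmetric] cancel)
    qed
    ultimately show ?thesis using exp_t by (simp add: mult_ac power_mult_distrib)
  qed
  have exponent_eq: "real (k * s - t) = real k * real s - T" using tks unfolding M_T_def by simp
  have "(T / M) ^ (k * s - t) = exp ((real k * real s - T) * ln (T / M))"
    using T_pos M_pos by (subst power_eq_exp_ln) (simp_all add: exponent_eq)
  then show ?thesis using factor_le factor_eq unfolding M_T_def by (simp add: exp_add)
qed

lemma small_cut_exponent_le:
  fixes \<eta> K L l :: real
  assumes \<eta>: "0 < \<eta>" and K: "100 \<le> K" and ln_K: "2 / \<eta> \<le> ln K"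
    and L: "2 / \<eta> \<le> L" and lam_L: "l - ln K \<le> L"
  shows "1 + l + 3/2 * K \<le> \<eta> * K * L"
proof -
  have K_ineq: "1 + 2 * ln K \<le> K / 2" using one_plus_2_ln_le_half K by simp
  show ?thesis
  proof (cases "2 * ln K \<le> l")
    case True
    then have "l / 2 \<le> L" using lam_L by linarith
    then have a: "\<eta> * K * (l / 2) \<le> \<eta> * K * L" using \<eta> K by (intro mult_left_mono) simp_all
    have "ln K \<le> K - 1" using K by (intro ln_le_minus_one) simp
    then have "2 / \<eta> \<le> K" using ln_K by linarith
    then have "\<eta> * K / 2 - 1 \<ge> 0" using \<eta> by (simp add: field_simps)
    then have b: "(\<eta> * K / 2 - 1) * (2 * ln K) \<le> (\<eta> * K / 2 - 1) * l" using True by (intro mult_left_mono)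
    have "\<eta> * ln K \<ge> 2" using ln_K \<eta> by (simp add: field_simps)
    then have c: "K * (\<eta> * ln K) \<ge> K * 2" using K by (intro mult_left_mono) simp_all
    show ?thesis using a b c K_ineq by (simp add: algebra_simps)
  next
    case False
    have "\<eta> * L \<ge> 2" using L \<eta> by (simp add: field_simps)
    then have "K * (\<eta> * L) \<ge> K * 2" using K by (intro mult_left_mono) simp_all
    then show ?thesis using False K_ineq by (simp add: algebra_simps)
  qed
qed

text \<open>For small cuts the colours of S are confined to a set of size t \<le> (1 - \<delta>/8) k s, far
  fewer than the k s colour slots of S; each of the \<delta> k s / 8 surplus slots then costs a
  factor t/m \<le> exp(-16/\<delta>).\<close>

lemma confined_bound_small_cut:
  fixes n m k s t :: nat and \<delta> :: real
  assumes \<delta>: "0 < \<delta>" "\<delta> \<le> 1"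
    and n2: "2 \<le> n" and mn: "n \<le> m" and km: "k \<le> m" and k1: "1 \<le> k"
    and s1: "1 \<le> s"
    and small: "real k * real s \<le> exp (- 16 / \<delta>) * real m"
    and t_le: "real t \<le> (1 - \<delta>/8) * real k * real s"
    and K_ge: "100 \<le> real k" and ln_K_ge: "16 / \<delta> \<le> ln (real k)"
  shows "confined_bound n m k s t \<le> exp (- real k * real s / 2)"
proof (cases "t = 0")
  case True
  then have "t < k" using k1 by simp
  then show ?thesis using s1 by (simp add: confined_bound_def binomial_eq_0 zero_power)
next
  case False
  then have t1: "1 \<le> t" by simp
  define N M K S T where "N = real n" "M = real m" "K = real k" "S = real s" "T = real t"
  define \<eta> where "\<eta> = \<delta> / 8"
  define L where "L = ln (M / (K * S))"
  have \<eta>: "0 < \<eta>" using \<delta> unfolding \<eta>_def by simp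
  have N_pos: "N \<ge> 2" and MN: "N \<le> M" and S_pos: "S \<ge> 1" and K: "K \<ge> 100" and T_pos: "T \<ge> 1"
    using n2 mn s1 K_ge t1 unfolding N_M_K_S_T_def by simp_all
  have M_pos: "M > 0" and KS_pos: "K * S > 0" using MN N_pos K S_pos by simp_all
  have T_le: "T \<le> (1 - \<eta>) * K * S" using t_le unfolding N_M_K_S_T_def \<eta>_def by simp
  have KS_le: "K * S \<le> exp (- 2 / \<eta>) * M" using small unfolding N_M_K_S_T_def \<eta>_def by simp
  have "\<eta> * K * S \<ge> 0" using \<eta> K S_pos by simp
  then have TKS: "T \<le> K * S" using T_le by (simp add: algebra_simps)
  have tks: "t \<le> k * s" using TKS unfolding N_M_K_S_T_def by (metis of_nat_le_iff of_nat_mult)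
  have "exp (- 2 / \<eta>) * M \<le> M" using \<eta> M_pos by (simp add: mult_le_cancel_right1)
  then have tm: "t \<le> m" using TKS KS_le unfolding N_M_K_S_T_def by simp
  have ln_KS_M: "ln (K * S / M) = - L" unfolding L_def using KS_pos M_pos by (simp add: ln_div)
  have L: "L \<ge> 2 / \<eta>"
  proof -
    have "K * S / M \<le> exp (- 2 / \<eta>)" using KS_le M_pos by (simp add: field_simps)
    then have "ln (K * S / M) \<le> ln (exp (- 2 / \<eta>))" using KS_pos M_pos by (intro ln_mono) simp_all
    then show ?thesis using ln_KS_M by simp
  qed
  have colours: "real (m choose t) * (real (t choose k) / real (m choose k)) ^ s \<le> exp (K * S - \<eta> * K * S * L)"
  proof -
    have "ln (T / M) \<le> ln (K * S / M)"
      using T_pos M_pos TKS by (intro ln_mono divide_right_mono) simp_all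
    then have "(K * S - T) * ln (T / M) \<le> (K * S - T) * (- L)"
      using TKS ln_KS_M by (intro mult_left_mono) simp_all
    also have "\<dots> \<le> (\<eta> * K * S) * (- L)"
    proof -
      have "\<eta> * K * S \<le> K * S - T" using T_le by (simp add: algebra_simps)
      moreover have "L \<ge> 0" using L \<eta> by (smt (verit) divide_pos_pos)
      ultimately show ?thesis by (simp add: mult_right_mono)
    qed
    finally have "T + (K * S - T) * ln (T / M) \<le> K * S - \<eta> * K * S * L" using TKS by simp
    then show ?thesis
      using confined_colour_factor_le[OF t1 tks tm km] unfolding N_M_K_S_T_def
      by (meson exp_le_cancel_iff order_trans)
  qed
  have choose_le: "real (n choose s) \<le> exp (S * (1 + ln (N / S)))"
    using binomial_le_exp_entropy[of s n] n2 s1 unfolding N_M_K_S_T_def by simp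
  have ln_K: "2 / \<eta> \<le> ln K" using ln_K_ge unfolding N_M_K_S_T_def \<eta>_def by simp
  have "ln (N / S) - ln K = ln (N / (K * S))" using N_pos S_pos K by (simp add: ln_div ln_mult)
  also have "\<dots> \<le> L" unfolding L_def using MN KS_pos N_pos by (intro ln_mono divide_right_mono) simp_all
  finally have "1 + ln (N / S) + 3/2 * K \<le> \<eta> * K * L"
    by (rule small_cut_exponent_le[OF \<eta> K ln_K L])
  then have "S * (1 + ln (N / S) + 3/2 * K) \<le> S * (\<eta> * K * L)"
    using S_pos by (intro mult_left_mono) simp_all
  then have "S * (1 + ln (N / S)) + (K * S - \<eta> * K * S * L) \<le> - K * S / 2"
    by (simp add: algebra_simps)
  then show ?thesis
    unfolding confined_bound_def N_M_K_S_T_def[symmetric]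
    by (intro mult_le_exp_add[OF _ choose_le _ colours]) simp_all
qed

lemma spread_bound_large_cut:
  fixes n m k s t :: nat
  assumes n2: "2 \<le> n" and mn: "n \<le> m" and km: "k \<le> m"
    and sn: "2 * s \<le> n" and tm: "t \<le> m"
    and t_ge: "3 * real m / real k \<le> real t" and k1: "1 \<le> k"
  shows "spread_bound n m k s t \<le> exp (- real n / 4)"
proof -
  have M_pos: "real m > 0" using n2 mn by simp
  have K_pos: "real k > 0" using k1 by simp
  have n_minus_s: "real (n - s) = real n - real s" using sn by simp
  have avoid: "(real ((m - t) choose k) / real (m choose k)) ^ (n - s) \<le> exp (- real k * real t * real (n - s) / real m)"
    using binomial_ratio_power_le_exp[OF km tm] M_pos by simp
  have "3 \<le> real k * real t / real m" using t_ge M_pos K_pos by (simp add: field_simps)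
  then have "3 * real (n - s) \<le> (real k * real t / real m) * real (n - s)" by (intro mult_right_mono) simp_all
  also have "\<dots> = real k * real t * real (n - s) / real m" by simp
  finally have exponent_ge0: "3 * real (n - s) \<le> real k * real t * real (n - s) / real m" .
  have "real (n - s) \<ge> real n / 2" using sn n_minus_s by simp
  then have exponent_ge: "real k * real t * real (n - s) / real m \<ge> 3 * (real n / 2)" using exponent_ge0 by linarith
  have choose: "real (n choose s) \<le> exp (real n * ln 2)" by (rule binomial_le_exp_ln2)
  show ?thesis
    unfolding spread_bound_def
  proof (rule mult_le_exp_add[OF _ choose _ avoid])
    have "real n * ln 2 \<le> real n * 1" using ln_2_less_1 by (intro mult_left_mono) simp_all
    then show "real n * ln 2 + - real k * real t * real (n - s) / real m \<le> - real n / 4" using exponent_ge by simp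
  qed simp_all
qed

lemma two_le_ln_quarter: "100 \<le> (K::real) \<Longrightarrow> 2 \<le> ln (K / 4)"
proof -
  assume K: "100 \<le> K"
  have "exp (1::real) * exp 1 \<le> 3 * 3" using exp_le by (intro mult_mono) simp_all
  then have "exp 2 \<le> K / 4" using K by (simp add: exp_add[symmetric])
  then show ?thesis using K by (simp add: ln_ge_iff)
qed

lemma large_cut_exponent_le:
  fixes N M K S T \<theta> :: real
  assumes N: "0 < N" "N \<le> M" and K: "100 \<le> K" and S: "0 \<le> S"
    and T: "1 \<le> T" "T \<le> 4 * M / K"
    and large: "\<theta> * M < K * S" and \<theta>: "8 \<le> K * \<theta>" "8 \<le> \<theta> * ln (K / 4)"
  shows "N * ln 2 + (T + (K * S - T) * ln (T / M)) \<le> - N / 4"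
proof -
  have M_pos: "M > 0" using N by simp
  have ln_K4: "2 \<le> ln (K / 4)" using K by (rule two_le_ln_quarter)
  have KS8: "8 * M / K \<le> K * S"
  proof -
    have "8 * M \<le> (K * \<theta>) * M" using \<theta> M_pos by (intro mult_right_mono) simp_all
    then have "8 * M / K \<le> \<theta> * M" using K by (simp add: field_simps)
    then show ?thesis using large by simp
  qed
  then have TKS: "T \<le> K * S / 2" using T by simp
  have "ln (T / M) \<le> ln (4 / K)"
    using T M_pos K by (intro ln_mono) (simp_all add: field_simps)
  also have "ln (4 / K) = - ln (K / 4)" using K by (simp add: ln_div)
  finally have "(K * S - T) * ln (T / M) \<le> (K * S - T) * (- ln (K / 4))"
    using TKS T by (intro mult_left_mono) simp_all
  also have "\<dots> \<le> (K * S / 2) * (- ln (K / 4))"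
    using TKS ln_K4 by (intro mult_right_mono_neg) simp_all
  finally have colour_exp: "(K * S - T) * ln (T / M) \<le> - (K * S / 2) * ln (K / 4)" by simp
  have a: "(K * S / 4) * ln (K / 4) \<ge> (2 * M / K) * 2"
    using KS8 ln_K4 M_pos K S by (intro mult_mono) (simp_all add: field_simps)
  have "(K * S / 4) * ln (K / 4) \<ge> (\<theta> * M / 4) * ln (K / 4)"
    using large ln_K4 by (intro mult_right_mono) simp_all
  moreover have "(\<theta> * M / 4) * ln (K / 4) = (\<theta> * ln (K / 4)) * M / 4" by simp
  moreover have "(\<theta> * ln (K / 4)) * M / 4 \<ge> 8 * M / 4"
    using \<theta> M_pos by (intro divide_right_mono mult_right_mono) simp_all
  ultimately have "(K * S / 4) * ln (K / 4) \<ge> 2 * N" using N by linarith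
  with a have "(K * S / 2) * ln (K / 4) \<ge> 4 * M / K + 2 * N" by simp
  moreover have "N * ln 2 \<le> N * 1" using ln_2_less_1 N by (intro mult_left_mono) simp_all
  ultimately show ?thesis using colour_exp T N by linarith
qed

lemma confined_bound_large_cut:
  fixes n m k s t :: nat and \<theta> :: real
  assumes n2: "2 \<le> n" and mn: "n \<le> m" and km: "k \<le> m"
    and large: "\<theta> * real m < real k * real s"
    and K_ge: "100 \<le> real k" "8 \<le> real k * \<theta>" "8 \<le> \<theta> * ln (real k / 4)"
    and t_ge: "3 * real m / real k \<le> real t" and t_le: "real t \<le> 3 * real m / real k + 1"
  shows "confined_bound n m k s t \<le> exp (- real n / 4)"
proof -
  define N M K S T where "N = real n" "M = real m" "K = real k" "S = real s" "T = real t"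
  have N_pos: "N \<ge> 2" and MN: "N \<le> M" and K: "K \<ge> 100" and KM: "K \<le> M"
    using n2 mn K_ge km unfolding N_M_K_S_T_def by simp_all
  have M_pos: "M > 0" using MN N_pos by simp
  have T3: "3 * M / K \<le> T" and "T \<le> 3 * M / K + 1" using t_ge t_le unfolding N_M_K_S_T_def by simp_all
  moreover have "1 \<le> M / K" using KM K by simp
  ultimately have T4: "T \<le> 4 * M / K" by simp
  have "0 < 3 * M / K" using M_pos K by simp
  then have t1: "1 \<le> t" using T3 unfolding N_M_K_S_T_def by simp
  have "4 * M / K \<le> M" using K M_pos by (simp add: field_simps)
  then have tm: "t \<le> m" using T4 unfolding N_M_K_S_T_def by simp
  have "8 * M / K \<le> \<theta> * M" using K_ge M_pos K unfolding N_M_K_S_T_def by (simp add: field_simps)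
  then have "T \<le> K * S" using T4 large unfolding N_M_K_S_T_def by simp
  then have tks: "t \<le> k * s" unfolding N_M_K_S_T_def by (metis of_nat_le_iff of_nat_mult)
  have choose: "real (n choose s) \<le> exp (N * ln 2)" using binomial_le_exp_ln2 unfolding N_M_K_S_T_def by simp
  have colours: "real (m choose t) * (real (t choose k) / real (m choose k)) ^ s
       \<le> exp (T + (K * S - T) * ln (T / M))"
    using confined_colour_factor_le[OF t1 tks tm km] unfolding N_M_K_S_T_def by simp
  have "N * ln 2 + (T + (K * S - T) * ln (T / M)) \<le> - N / 4"
    using t1 T4 large K_ge N_pos MN K unfolding N_M_K_S_T_def
    by (intro large_cut_exponent_le) simp_all
  then show ?thesis
    unfolding confined_bound_def N_M_K_S_T_def[symmetric]
    by (intro mult_le_exp_add[OF _ choose _ colours]) simp_all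
qed

definition cut_threshold :: "real \<Rightarrow> nat \<Rightarrow> nat \<Rightarrow> nat \<Rightarrow> nat" where
  "cut_threshold \<delta> m k s = min m
     (if real k * real s \<le> exp (- 16 / \<delta>) * real m then nat \<lfloor>(1 - \<delta>/8) * real k * real s\<rfloor>
      else nat \<lceil>3 * real m / real k\<rceil>)"

lemma cut_bounds_small_cut:
  fixes n m k s :: nat and \<delta> :: real
  defines "t \<equiv> cut_threshold \<delta> m k s"
  assumes \<delta>: "0 < \<delta>" "\<delta> \<le> 1"
    and hyp: "(1 + \<delta>) * real m * ln (real n) \<le> (real k)\<^sup>2 * real n"
    and n2: "2 \<le> n" and mn: "n \<le> m" and km: "k \<le> m" and k1: "1 \<le> k"
    and s1: "1 \<le> s" and sn: "2 * s \<le> n"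
    and K_ge: "100 \<le> real k" "16 / \<delta> \<le> ln (real k)" "8 / \<delta> \<le> real k"
    and n_large: "ln (8 * exp 1 / \<delta>) \<le> 3/8 * ln (real n)"
    and small: "real k * real s \<le> exp (- 16 / \<delta>) * real m"
  shows "confined_bound n m k s t + spread_bound n m k s t
      \<le> exp (- real k / 2) ^ s + exp (- (\<delta>/8) * ln (real n)) ^ s"
proof -
  define x where "x = (1 - \<delta>/8) * real k * real s"
  have x_nn: "x \<ge> 0" unfolding x_def using \<delta> by simp
  have "x \<le> real k * real s" unfolding x_def using \<delta> s1 by (simp add: mult_le_cancel_right1 algebra_simps)
  also have "\<dots> \<le> exp (- 16 / \<delta>) * real m" by (rule small)
  also have "\<dots> \<le> 1 * real m" using \<delta> by (intro mult_right_mono) simp_all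
  finally have "nat \<lfloor>x\<rfloor> \<le> m" using x_nn by linarith
  then have "t = nat \<lfloor>x\<rfloor>"
    using small unfolding t_def cut_threshold_def x_def by simp
  then have t: "real t = of_int \<lfloor>x\<rfloor>" using x_nn by simp
  have "1 \<le> (\<delta>/8) * real k * real s"
  proof -
    have "1 \<le> (\<delta>/8) * real k" using K_ge(3) \<delta> by (simp add: field_simps)
    also have "\<dots> \<le> (\<delta>/8) * real k * real s"
      using mult_left_mono[of 1 "real s" "\<delta>/8 * real k"] s1 \<delta> by simp
    finally show ?thesis .
  qed
  then have t_ge: "(1 - \<delta>/4) * real k * real s \<le> real t"
    unfolding t x_def by (simp add: algebra_simps) linarith
  have t_le: "real t \<le> (1 - \<delta>/8) * real k * real s" unfolding t x_def by simp
  have tm: "t \<le> m" unfolding t_def cut_threshold_def by simp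
  have "confined_bound n m k s t \<le> exp (- real k * real s / 2)"
    by (rule confined_bound_small_cut[OF \<delta> n2 mn km k1 s1 small t_le K_ge(1,2)])
  moreover have "spread_bound n m k s t \<le> exp (- (\<delta>/8) * real s * ln (real n))"
    by (rule spread_bound_small_cut[OF \<delta> hyp n2 mn km s1 sn tm t_ge n_large])
  ultimately show ?thesis by (simp add: mult_ac flip: exp_of_nat_mult)
qed

lemma cut_bounds_large_cut:
  fixes n m k s :: nat and \<delta> :: real
  defines "t \<equiv> cut_threshold \<delta> m k s" and "\<theta> \<equiv> exp (- 16 / \<delta>)"
  assumes n2: "2 \<le> n" and mn: "n \<le> m" and km: "k \<le> m" and k1: "1 \<le> k" and sn: "2 * s \<le> n"
    and K_ge: "100 \<le> real k" "8 \<le> real k * \<theta>" "8 \<le> \<theta> * ln (real k / 4)"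
    and large: "\<not> real k * real s \<le> \<theta> * real m"
  shows "confined_bound n m k s t + spread_bound n m k s t \<le> 2 * exp (- real n / 4)"
proof -
  define x where "x = 3 * real m / real k"
  have x_nn: "x \<ge> 0" unfolding x_def by simp
  have "3 * real m \<le> real k * real m" using K_ge(1) by (intro mult_right_mono) simp_all
  then have "x \<le> real m" unfolding x_def using k1 by (simp add: field_simps)
  then have "\<lceil>x\<rceil> \<le> int m" by (simp add: ceiling_le_iff)
  then have "t = nat \<lceil>x\<rceil>"
    using large unfolding t_def cut_threshold_def x_def \<theta>_def by simp
  then have t: "real t = of_int \<lceil>x\<rceil>" using x_nn by simp
  have t_ge: "x \<le> real t" and t_le: "real t \<le> x + 1" unfolding t by linarith+
  have tm: "t \<le> m" unfolding t_def cut_threshold_def by simp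
  have "spread_bound n m k s t \<le> exp (- real n / 4)"
    using t_ge unfolding x_def by (intro spread_bound_large_cut[OF n2 mn km sn tm _ k1])
  moreover have "confined_bound n m k s t \<le> exp (- real n / 4)"
  proof (rule confined_bound_large_cut[OF n2 mn km _ K_ge(1,2,3)])
    show "\<theta> * real m < real k * real s" using large by simp
  qed (use t_ge t_le x_def in simp_all)
  ultimately show ?thesis by simp
qed

lemma rig_prob_disconnected_le_explicit:
  fixes n m k :: nat and \<delta> :: real
  assumes \<delta>: "0 < \<delta>" "\<delta> \<le> 1"
    and hyp: "(1 + \<delta>) * real m * ln (real n) \<le> (real k)\<^sup>2 * real n"
    and n2: "2 \<le> n" and mn: "n \<le> m" and km: "k \<le> m" and k1: "1 \<le> k"
    and K_ge: "100 \<le> real k" "16 / \<delta> \<le> ln (real k)" "8 / \<delta> \<le> real k"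
      "8 \<le> real k * exp (- 16 / \<delta>)" "8 \<le> exp (- 16 / \<delta>) * ln (real k / 4)"
    and n_large: "ln (8 * exp 1 / \<delta>) \<le> 3/8 * ln (real n)" "exp (- (\<delta>/8) * ln (real n)) \<le> 1/2"
  shows "rig_prob n m k (\<lambda>F. \<not> rig_connected n F)
     \<le> 2 * exp (- (\<delta>/8) * ln (real n)) + 2 * exp (- real k / 2) + 2 * real n * exp (- real n / 4)"
proof -
  define a where "a = exp (- (\<delta>/8) * ln (real n))"
  define b where "b = exp (- real k / 2)"
  define c where "c = exp (- real n / 4)"
  let ?t = "cut_threshold \<delta> m k"
  have "a \<ge> 0" "b \<ge> 0" "c \<ge> 0" unfolding a_def b_def c_def by simp_all
  have "rig_prob n m k (\<lambda>F. \<not> rig_connected n F)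
      \<le> (\<Sum>s\<in>{1..n div 2}. confined_bound n m k s (?t s) + spread_bound n m k s (?t s))"
    using km by (intro rig_prob_disconnected_le) (simp add: cut_threshold_def)
  also have "\<dots> \<le> (\<Sum>s\<in>{1..n div 2}. b ^ s + a ^ s + 2 * c)"
  proof (rule sum_mono)
    fix s assume "s \<in> {1..n div 2}"
    then have s1: "1 \<le> s" and sn: "2 * s \<le> n" by auto
    show "confined_bound n m k s (?t s) + spread_bound n m k s (?t s) \<le> b ^ s + a ^ s + 2 * c"
    proof (cases "real k * real s \<le> exp (- 16 / \<delta>) * real m")
      case True
      then show ?thesis
        using cut_bounds_small_cut[OF \<delta> hyp n2 mn km k1 s1 sn K_ge(1-3) n_large(1)] \<open>c \<ge> 0\<close>
        unfolding a_def b_def by simp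
    next
      case False
      then show ?thesis
        using cut_bounds_large_cut[OF n2 mn km k1 sn K_ge(1,4,5)]
          zero_le_power[OF \<open>a \<ge> 0\<close>, of s] zero_le_power[OF \<open>b \<ge> 0\<close>, of s]
        unfolding c_def by linarith
    qed
  qed
  also have "\<dots> = (\<Sum>s\<in>{1..n div 2}. b ^ s) + (\<Sum>s\<in>{1..n div 2}. a ^ s) + real (n div 2) * (2 * c)"
    by (simp add: sum.distrib)
  also have "\<dots> \<le> 2 * b + 2 * a + real n * (2 * c)"
  proof -
    have "exp (- real k / 2) \<le> exp (- 1)" using K_ge(1) by simp
    also have "exp (- 1) \<le> (1/2::real)"
      using exp_ge_add_one_self[of "1::real"] by (simp add: exp_minus field_simps)
    finally have "(\<Sum>s\<in>{1..n div 2}. b ^ s) \<le> 2 * b"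
      using \<open>b \<ge> 0\<close> unfolding b_def by (intro sum_power_atLeast1_le)
    moreover have "(\<Sum>s\<in>{1..n div 2}. a ^ s) \<le> 2 * a"
      using n_large(2) \<open>a \<ge> 0\<close> unfolding a_def by (intro sum_power_atLeast1_le)
    moreover have "real (n div 2) * (2 * c) \<le> real n * (2 * c)"
      using \<open>c \<ge> 0\<close> by (intro mult_right_mono) simp_all
    ultimately show ?thesis by linarith
  qed
  finally show ?thesis unfolding a_def b_def c_def by (simp add: mult_ac)
qed

subsection \<open>Estimates for isolated vertices\<close>

lemma second_moment_ratio_le:
  fixes q1 q2 :: real and n :: nat
  assumes q1: "0 < q1" "q1 \<le> 1" and q2: "0 \<le> q2" "q2 \<le> q1\<^sup>2" and n2: "2 \<le> n"
  defines "\<mu> \<equiv> real n * q1 ^ (n - 1)"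
  shows "((\<mu> + real n * (real n - 1) * (q1 * q2 ^ (n - 2))) - \<mu>\<^sup>2) / \<mu>\<^sup>2 \<le> 1 / \<mu> + 1 / q1 - 1"
proof -
  have \<mu>_pos: "\<mu> > 0" unfolding \<mu>_def using q1 n2 by simp
  have "q2 ^ (n - 2) \<le> (q1\<^sup>2) ^ (n - 2)" using q2 by (intro power_mono) simp_all
  then have "q1 * q2 ^ (n - 2) \<le> q1 * (q1\<^sup>2) ^ (n - 2)" using q1 by (intro mult_left_mono) simp_all
  moreover have "real n * (real n - 1) \<le> real n * real n" by (intro mult_left_mono) simp_all
  ultimately have "real n * (real n - 1) * (q1 * q2 ^ (n - 2)) \<le> real n * real n * (q1 * (q1\<^sup>2) ^ (n - 2))"
    using q1 q2 n2 by (intro mult_mono) simp_all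
  also have "\<dots> = \<mu>\<^sup>2 / q1"
  proof -
    have exponent_eq: "2 * (n - 1) = Suc (2 * (n - 2) + 1)" using n2 by simp
    have "\<mu>\<^sup>2 = real n * real n * q1 ^ (2 * (n - 1))"
      unfolding \<mu>_def by (simp add: power2_eq_square power_mult[symmetric] mult_2 power_add)
    also have "\<dots> = real n * real n * (q1 * (q1 * (q1\<^sup>2) ^ (n - 2)))"
      unfolding exponent_eq by (simp add: power_mult power2_eq_square mult_ac)
    finally show ?thesis using q1 by (simp add: field_simps)
  qed
  finally have cross_le: "real n * (real n - 1) * (q1 * q2 ^ (n - 2)) \<le> \<mu>\<^sup>2 / q1" .
  have "((\<mu> + real n * (real n - 1) * (q1 * q2 ^ (n - 2))) - \<mu>\<^sup>2) / \<mu>\<^sup>2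
      = 1 / \<mu> + real n * (real n - 1) * (q1 * q2 ^ (n - 2)) / \<mu>\<^sup>2 - 1"
    using \<mu>_pos by (simp add: field_simps power2_eq_square)
  also have "real n * (real n - 1) * (q1 * q2 ^ (n - 2)) / \<mu>\<^sup>2 \<le> (\<mu>\<^sup>2 / q1) / \<mu>\<^sup>2"
    using cross_le \<mu>_pos by (intro divide_right_mono) simp_all
  also have "(\<mu>\<^sup>2 / q1) / \<mu>\<^sup>2 = 1 / q1" using \<mu>_pos by simp
  finally show ?thesis by simp
qed

lemma rig_prob_disconnected_ge_mean:
  assumes n2: "2 \<le> n" and k2m: "2 * k \<le> m" and avoid_pos: "(m - k) choose k > 0"
  defines "q \<equiv> real ((m - k) choose k) / real (m choose k)"
  shows "2 - 1 / (real n * q ^ (n - 1)) - 1 / q \<le> rig_prob n m k (\<lambda>F. \<not> rig_connected n F)"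
proof -
  define q2 where "q2 = real ((m - 2 * k) choose k) / real (m choose k)"
  have km: "k \<le> m" using k2m by simp
  have C_pos: "real (m choose k) > 0" using km by simp
  have "q > 0" unfolding q_def using avoid_pos C_pos by simp
  moreover have "q \<le> 1" unfolding q_def using C_pos binomial_right_mono[of "m - k" m k] by simp
  moreover have "0 \<le> q2" unfolding q2_def by simp
  moreover have "q2 \<le> q\<^sup>2"
    using binomial_diff_sq_le[OF k2m, of k] C_pos unfolding q_def q2_def
    by (simp add: power2_eq_square field_simps)
  ultimately have "((real n * q ^ (n - 1) + real n * (real n - 1) * (q * q2 ^ (n - 2))) - (real n * q ^ (n - 1))\<^sup>2)
      / (real n * q ^ (n - 1))\<^sup>2 \<le> 1 / (real n * q ^ (n - 1)) + 1 / q - 1"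
    using n2 by (rule second_moment_ratio_le)
  with rig_prob_disconnected_ge_second_moment[OF n2 km avoid_pos] show ?thesis
    unfolding q_def q2_def by linarith
qed

lemma binomial_avoid_ratio_ge:
  assumes "2 * k \<le> m"
  shows "1 - (real k)\<^sup>2 / (real m - real k + 1) \<le> real ((m - k) choose k) / real (m choose k)"
proof -
  define D where "D = real m - real k + 1"
  have D_pos: "D > 0" and k_le_D: "real k \<le> D" using assms unfolding D_def by simp_all
  have C_pos: "real (m choose k) > 0" using assms by simp
  have "real (m choose k) * (real m - real k - real k + 1) ^ k \<le> real ((m - k) choose k) * D ^ k"
    using binomial_mult_power_ge[of k k m k] assms unfolding D_def by simp
  then have "((real m - real k - real k + 1) / D) ^ k \<le> real ((m - k) choose k) / real (m choose k)"
    using C_pos D_pos by (simp add: power_divide field_simps)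
  moreover have "(real m - real k - real k + 1) / D = 1 + (- real k / D)"
    using D_pos unfolding D_def by (simp add: field_simps)
  moreover have "- 1 \<le> - real k / D" using k_le_D D_pos by (simp add: field_simps)
  then have "1 + real k * (- real k / D) \<le> (1 + (- real k / D)) ^ k"
    by (rule Bernoulli_inequality)
  ultimately show ?thesis unfolding D_def by (simp add: power2_eq_square)
qed

lemma isolation_parameter_le:
  fixes K M L y :: real
  assumes y: "0 < y" "y < 1" and K: "1 \<le> K" and L: "0 < L" "L \<le> 1/4"
    and K_le: "K\<^sup>2 \<le> y * M * L"
  shows "K \<le> M * L" and "K\<^sup>2 / (M - K + 1) \<le> L * (y + 2 * L)"
proof -
  have "1 \<le> K\<^sup>2" using K by (simp add: one_le_power)
  then have "0 < (y * L) * M" using K_le by (simp add: mult_ac)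
  moreover have "0 < y * L" using y L by simp
  ultimately have M_pos: "M > 0" by (auto simp: zero_less_mult_iff)
  have "y * (M * L) \<le> 1 * (M * L)" using y M_pos L by (intro mult_right_mono) simp_all
  moreover have "K \<le> K\<^sup>2" using K by (simp add: power2_eq_square)
  ultimately show K_le_ML: "K \<le> M * L" using K_le by (simp add: mult_ac)
  then have D_ge: "M * (1 - L) \<le> M - K + 1" by (simp add: algebra_simps)
  have M_one_minus_L_pos: "M * (1 - L) > 0" using M_pos L by simp
  have "K\<^sup>2 / (M - K + 1) \<le> (y * M * L) / (M - K + 1)"
    using K_le D_ge M_one_minus_L_pos by (intro divide_right_mono) simp_all
  also have "\<dots> \<le> (y * M * L) / (M * (1 - L))"
    using D_ge M_one_minus_L_pos y L M_pos mult_pos_pos[of "M - K + 1" "M * (1 - L)"]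
    by (intro divide_left_mono) simp_all
  also have "\<dots> = y * L * (1 / (1 - L))" using M_pos by simp
  also have "\<dots> \<le> y * L * (1 + 2 * L)"
  proof -
    have "1 \<le> (1 + 2 * L) * (1 - L)" using L by (simp add: algebra_simps mult_nonneg_nonneg)
    then have "1 / (1 - L) \<le> 1 + 2 * L" using L by (simp add: field_simps)
    then show ?thesis using y L by (intro mult_left_mono) simp_all
  qed
  also have "\<dots> \<le> L * (y + 2 * L)"
  proof -
    have "y * (2 * L) \<le> 1 * (2 * L)" using y L by (intro mult_right_mono) simp_all
    then have "y * (1 + 2 * L) \<le> y + 2 * L" by (simp add: algebra_simps)
    then show ?thesis using L by (simp add: mult_left_mono mult_ac)
  qed
  finally show "K\<^sup>2 / (M - K + 1) \<le> L * (y + 2 * L)" .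
qed

lemma inverse_n_mult_power_le:
  fixes x q c :: real and n :: nat
  assumes x: "0 \<le> x" "x \<le> 1/2" and q: "1 - x \<le> q" and n: "1 \<le> n"
    and exponent: "real n * (x + 2 * x\<^sup>2) \<le> c * ln (real n)"
  shows "1 / (real n * q ^ (n - 1)) \<le> exp (- (1 - c) * ln (real n))"
proof -
  have "real n * (- x - 2 * x\<^sup>2) \<le> real n * ln (1 - x)"
    using ln_one_minus_pos_lower_bound[OF x] by (intro mult_left_mono) simp_all
  then have "exp (- (c * ln (real n))) \<le> exp (real n * ln (1 - x))"
    using exponent by (simp add: algebra_simps)
  also have "\<dots> = (1 - x) ^ n" using x by (intro power_eq_exp_ln[symmetric]) simp
  also have "\<dots> \<le> (1 - x) ^ (n - 1)" using x by (intro power_decreasing) simp_all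
  also have "\<dots> \<le> q ^ (n - 1)" using q x by (intro power_mono) simp_all
  finally have "real n * exp (- (c * ln (real n))) \<le> real n * q ^ (n - 1)"
    by (intro mult_left_mono) simp_all
  moreover have "real n * exp (- (c * ln (real n))) = exp (ln (real n) + - (c * ln (real n)))"
    using n by (metis exp_add exp_ln of_nat_0_less_iff less_le_trans zero_less_one)
  moreover have "ln (real n) + - (c * ln (real n)) = (1 - c) * ln (real n)" by (simp add: algebra_simps)
  ultimately have "exp ((1 - c) * ln (real n)) \<le> real n * q ^ (n - 1)" by simp
  then have "1 / (real n * q ^ (n - 1)) \<le> 1 / exp ((1 - c) * ln (real n))"
    by (intro divide_left_mono) (simp_all add: less_le_trans[OF exp_gt_zero])
  then show ?thesis by (simp only: mult_minus_left exp_minus inverse_eq_divide)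
qed

lemma rig_prob_disconnected_ge_explicit:
  fixes n m k :: nat and y :: real
  assumes y: "0 < y" "y < 1"
    and hyp: "(real k)\<^sup>2 * real n \<le> y * real m * ln (real n)"
    and n3: "3 \<le> n" and k1: "1 \<le> k"
    and n_large: "ln (real n) / real n \<le> (1 - y) / 20" "ln (real n) / real n \<le> 1/4"
  shows "1 - exp (- ((1 - y) / 2) * ln (real n)) - 4 * (ln (real n) / real n)
     \<le> rig_prob n m k (\<lambda>F. \<not> rig_connected n F)"
proof -
  define N M K where "N = real n" "M = real m" "K = real k"
  define L where "L = ln N / N"
  define x where "x = K\<^sup>2 / (M - K + 1)"
  define q where "q = real ((m - k) choose k) / real (m choose k)"
  define \<mu> where "\<mu> = real n * q ^ (n - 1)"
  have N3: "N \<ge> 3" and K1: "K \<ge> 1" using n3 k1 unfolding N_M_K_def by simp_all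
  have L_pos: "L > 0" unfolding L_def using N3 by simp
  have L_le: "L \<le> (1 - y) / 20" "L \<le> 1/4" using n_large unfolding L_def N_M_K_def by simp_all
  have K_le: "K\<^sup>2 \<le> y * M * L"
    using hyp N3 unfolding L_def N_M_K_def by (simp add: field_simps)
  have "K \<le> M * L" and x_le: "x \<le> L * (y + 2 * L)"
    unfolding x_def using isolation_parameter_le[OF y K1 L_pos L_le(2) K_le] by simp_all
  moreover have "M * L \<le> M * (1/4)" using L_le unfolding N_M_K_def by (intro mult_left_mono) simp_all
  ultimately have "K \<le> M / 4" by simp
  then have k2m: "2 * k \<le> m" and D_pos: "M - K + 1 > 0" using K1 unfolding N_M_K_def by linarith+
  have x_nn: "x \<ge> 0" unfolding x_def using D_pos by simp
  have "L * (y + 2 * L) \<le> L * 2" using y L_le L_pos by (intro mult_left_mono) simp_all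
  then have x_le_2L: "x \<le> 2 * L" using x_le by simp
  then have x_half: "x \<le> 1/2" using L_le by simp
  have q_ge: "1 - x \<le> q"
    using binomial_avoid_ratio_ge[OF k2m] unfolding q_def x_def N_M_K_def by simp
  then have "q > 0" using x_half by simp
  then have "(m - k) choose k > 0" unfolding q_def by (cases "(m - k) choose k = 0") simp_all
  from rig_prob_disconnected_ge_mean[OF _ k2m this] n3
  have main: "2 - 1 / \<mu> - 1 / q \<le> rig_prob n m k (\<lambda>F. \<not> rig_connected n F)"
    unfolding \<mu>_def q_def by simp
  have "1 / q \<le> 1 / (1 - x)" using q_ge x_half by (intro divide_left_mono) simp_all
  then have "1 / q - 1 \<le> 1 / (1 - x) - 1" by simp
  also have "\<dots> = x / (1 - x)" using x_half by (simp add: field_simps)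
  also have "\<dots> \<le> x / (1/2)" using x_half x_nn by (intro divide_left_mono) simp_all
  finally have q_term: "1 / q - 1 \<le> 4 * L" using x_le_2L by simp
  have "N * (x + 2 * x\<^sup>2) \<le> N * (L * ((1 + y) / 2))"
  proof (intro mult_left_mono)
    have "x\<^sup>2 \<le> (2 * L)\<^sup>2" using x_le_2L x_nn by (intro power_mono) simp_all
    then have "x + 2 * x\<^sup>2 \<le> L * (y + 10 * L)" using x_le by (simp add: algebra_simps power2_eq_square)
    also have "\<dots> \<le> L * ((1 + y) / 2)" using L_le L_pos by (intro mult_left_mono) simp_all
    finally show "x + 2 * x\<^sup>2 \<le> L * ((1 + y) / 2)" .
  qed (use N3 in simp)
  moreover have "N * (L * ((1 + y) / 2)) = (1 + y) / 2 * ln N" unfolding L_def using N3 by simp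
  ultimately have "N * (x + 2 * x\<^sup>2) \<le> (1 + y) / 2 * ln N" by linarith
  from inverse_n_mult_power_le[OF x_nn x_half q_ge _ this[unfolded N_M_K_def]] n3
  have "1 / \<mu> \<le> exp (- ((1 - y) / 2) * ln (real n))"
    unfolding \<mu>_def by (simp add: field_simps)
  then show ?thesis using main q_term unfolding L_def N_M_K_def by linarith
qed

subsection \<open>The threshold\<close>

lemma sqrt_ln_le_of_threshold:
  fixes \<delta> :: real
  assumes n3: "3 \<le> n" and mn: "n \<le> m" and \<delta>: "0 \<le> \<delta>"
    and hyp: "(1 + \<delta>) * real m * ln (real n) \<le> (real k)\<^sup>2 * real n"
  shows "sqrt (ln (real n)) \<le> real k"
proof -
  have "real n \<le> real m" "0 \<le> \<delta> * real m" using mn \<delta> by simp_all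
  then have "real n \<le> (1 + \<delta>) * real m" by (simp add: algebra_simps)
  then have "real n * ln (real n) \<le> (1 + \<delta>) * real m * ln (real n)"
    using n3 by (intro mult_right_mono) simp_all
  also have "\<dots> \<le> (real k)\<^sup>2 * real n" by (rule hyp)
  finally have "ln (real n) \<le> (real k)\<^sup>2" using n3 by (simp add: mult.commute)
  then show ?thesis using real_sqrt_le_mono by fastforce
qed

lemma rig_prob_disconnected_eventually_le:
  fixes \<delta> :: real
  assumes \<delta>: "0 < \<delta>" "\<delta> \<le> 1"
  obtains h :: "nat \<Rightarrow> real" where "h \<longlonglongrightarrow> 0"
    and "\<forall>\<^sub>F n in sequentially. \<forall>m k. n \<le> m \<longrightarrow> 1 \<le> k \<longrightarrow> k \<le> m
           \<longrightarrow> (1 + \<delta>) * real m * ln (real n) \<le> (real k)\<^sup>2 * real n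
           \<longrightarrow> rig_prob n m k (\<lambda>F. \<not> rig_connected n F) \<le> h n"
proof
  define \<theta> where "\<theta> = exp (- 16 / \<delta>)"
  have \<theta>_pos: "\<theta> > 0" unfolding \<theta>_def by simp
  \<comment> \<open>Lower bounds on k needed below; they hold eventually since k \<ge> sqrt (ln n).\<close>
  define C where "C = Max {100, exp (16 / \<delta>), 8 / \<delta>, 8 / \<theta>, 4 * exp (8 / \<theta>)}"
  have C: "100 \<le> C" "exp (16 / \<delta>) \<le> C" "8 / \<delta> \<le> C" "8 / \<theta> \<le> C" "4 * exp (8 / \<theta>) \<le> C"
    unfolding C_def by auto
  define h where "h n = 2 * exp (- (\<delta>/8) * ln (real n)) + 2 * exp (- sqrt (ln (real n)) / 2)
    + 2 * real n * exp (- real n / 4)" for n :: nat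
  show "h \<longlonglongrightarrow> 0" unfolding h_def using \<delta> by real_asymp
  have "filterlim (\<lambda>n::nat. sqrt (ln (real n))) at_top sequentially" by real_asymp
  then have ev_C: "\<forall>\<^sub>F n in sequentially. C \<le> sqrt (ln (real n))" by (simp add: filterlim_at_top)
  have "filterlim (\<lambda>n::nat. 3/8 * ln (real n)) at_top sequentially" by real_asymp
  then have ev_ln: "\<forall>\<^sub>F n in sequentially. ln (8 * exp 1 / \<delta>) \<le> 3/8 * ln (real n)"
    by (simp add: filterlim_at_top)
  have "(\<lambda>n::nat. exp (- (\<delta>/8) * ln (real n))) \<longlonglongrightarrow> 0" using \<delta> by real_asymp
  from order_tendstoD(2)[OF this, of "1/2"]
  have ev_exp: "\<forall>\<^sub>F n in sequentially. exp (- (\<delta>/8) * ln (real n)) \<le> 1/2"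
    by (auto elim: eventually_mono)
  show "\<forall>\<^sub>F n in sequentially. \<forall>m k. n \<le> m \<longrightarrow> 1 \<le> k \<longrightarrow> k \<le> m
           \<longrightarrow> (1 + \<delta>) * real m * ln (real n) \<le> (real k)\<^sup>2 * real n
           \<longrightarrow> rig_prob n m k (\<lambda>F. \<not> rig_connected n F) \<le> h n"
    using eventually_ge_at_top[of 3] ev_C ev_ln ev_exp
  proof eventually_elim
    case (elim n)
    show ?case
    proof (intro allI impI)
      fix m k :: nat
      assume mn: "n \<le> m" and k1: "1 \<le> k" and km: "k \<le> m"
        and hyp: "(1 + \<delta>) * real m * ln (real n) \<le> (real k)\<^sup>2 * real n"
      have n3: "3 \<le> n" and C_le: "C \<le> sqrt (ln (real n))" using elim by auto
      have k_ge: "sqrt (ln (real n)) \<le> real k"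
        using n3 mn \<delta> hyp by (intro sqrt_ln_le_of_threshold) simp_all
      with C_le C have K: "100 \<le> real k" "exp (16 / \<delta>) \<le> real k" "8 / \<delta> \<le> real k"
        "8 / \<theta> \<le> real k" "exp (8 / \<theta>) \<le> real k / 4" by auto
      have "16 / \<delta> \<le> ln (real k)" using K(1,2) by (simp add: ln_ge_iff)
      moreover have "8 \<le> real k * \<theta>" using K(4) \<theta>_pos by (simp add: field_simps)
      moreover have "8 \<le> \<theta> * ln (real k / 4)"
      proof -
        have "8 / \<theta> \<le> ln (real k / 4)" using K(1,5) by (simp add: ln_ge_iff)
        then show ?thesis using \<theta>_pos by (simp add: field_simps)
      qed
      ultimately have "rig_prob n m k (\<lambda>F. \<not> rig_connected n F)
          \<le> 2 * exp (- (\<delta>/8) * ln (real n)) + 2 * exp (- real k / 2) + 2 * real n * exp (- real n / 4)"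
        using rig_prob_disconnected_le_explicit[OF \<delta> hyp _ mn km k1 K(1) _ K(3)] elim
        unfolding \<theta>_def by simp
      moreover have "exp (- real k / 2) \<le> exp (- sqrt (ln (real n)) / 2)" using k_ge by simp
      ultimately show "rig_prob n m k (\<lambda>F. \<not> rig_connected n F) \<le> h n" unfolding h_def by linarith
    qed
  qed
qed

lemma rig_prob_connected_tendsto_1:
  fixes k m :: "nat \<Rightarrow> nat"
  assumes model: "\<forall>n\<ge>1. 1 \<le> k n \<and> k n \<le> m n" and mn: "\<forall>n\<ge>1. n \<le> m n"
    and lim: "liminf (\<lambda>n. ereal ((real (k n))\<^sup>2 * real n / (real (m n) * ln (real n)))) > 1"
  shows "(\<lambda>n. rig_prob n (m n) (k n) (rig_connected n)) \<longlonglongrightarrow> 1"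
proof -
  obtain z where z: "1 < z" "z < liminf (\<lambda>n. ereal ((real (k n))\<^sup>2 * real n / (real (m n) * ln (real n))))"
    using lim dense by blast
  then obtain y where y: "z = ereal y" by (cases z) auto
  define \<delta> where "\<delta> = min (y - 1) 1"
  have \<delta>: "0 < \<delta>" "\<delta> \<le> 1" "1 + \<delta> \<le> y" unfolding \<delta>_def using z y by auto
  obtain h where h: "h \<longlonglongrightarrow> 0"
    and ev_h: "\<forall>\<^sub>F n in sequentially. \<forall>m k. n \<le> m \<longrightarrow> 1 \<le> k \<longrightarrow> k \<le> m
           \<longrightarrow> (1 + \<delta>) * real m * ln (real n) \<le> (real k)\<^sup>2 * real n
           \<longrightarrow> rig_prob n m k (\<lambda>F. \<not> rig_connected n F) \<le> h n"
    using rig_prob_disconnected_eventually_le[OF \<delta>(1,2)] by blast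
  have "\<forall>\<^sub>F n in sequentially. y < (real (k n))\<^sup>2 * real n / (real (m n) * ln (real n))"
    using less_LiminfD[OF z(2)] y by simp
  then have lower: "\<forall>\<^sub>F n in sequentially. 1 - h n \<le> rig_prob n (m n) (k n) (rig_connected n)"
    using ev_h eventually_ge_at_top[of 3]
  proof eventually_elim
    case (elim n)
    then have mn_n: "n \<le> m n" and k_n: "1 \<le> k n" "k n \<le> m n" using model mn by auto
    have pos: "real (m n) * ln (real n) > 0" using elim mn_n by simp
    have "(1 + \<delta>) * (real (m n) * ln (real n)) \<le> y * (real (m n) * ln (real n))"
      using \<delta> pos by (intro mult_right_mono) simp_all
    also have "\<dots> \<le> (real (k n))\<^sup>2 * real n" using elim pos by (simp add: field_simps)
    finally have "rig_prob n (m n) (k n) (\<lambda>F. \<not> rig_connected n F) \<le> h n"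
      using elim mn_n k_n by (simp add: mult.assoc)
    then show ?case using rig_prob_eq_1_minus_not[OF k_n(2), of n "rig_connected n"] by simp
  qed
  have "(\<lambda>n. 1 - h n) \<longlonglongrightarrow> 1" using tendsto_diff[OF tendsto_const h, of 1] by simp
  from tendsto_sandwich[OF lower _ this tendsto_const] show ?thesis by (simp add: rig_prob_le_1)
qed

lemma rig_prob_disconnected_eventually_ge:
  fixes y :: real
  assumes y: "0 < y" "y < 1"
  obtains h :: "nat \<Rightarrow> real" where "h \<longlonglongrightarrow> 0"
    and "\<forall>\<^sub>F n in sequentially. \<forall>m k. 1 \<le> k \<longrightarrow> (real k)\<^sup>2 * real n \<le> y * real m * ln (real n)
           \<longrightarrow> 1 - h n \<le> rig_prob n m k (\<lambda>F. \<not> rig_connected n F)"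
proof
  define h where "h n = exp (- ((1 - y) / 2) * ln (real n)) + 4 * (ln (real n) / real n)" for n :: nat
  show "h \<longlonglongrightarrow> 0" unfolding h_def using y by real_asymp
  have "(\<lambda>n::nat. ln (real n) / real n) \<longlonglongrightarrow> 0" by real_asymp
  from order_tendstoD(2)[OF this, of "(1 - y) / 20"] order_tendstoD(2)[OF this, of "1/4"] y
  have "\<forall>\<^sub>F n in sequentially. ln (real n) / real n \<le> (1 - y) / 20"
    and "\<forall>\<^sub>F n in sequentially. ln (real n) / real n \<le> 1/4"
    by (auto elim: eventually_mono)
  then show "\<forall>\<^sub>F n in sequentially. \<forall>m k. 1 \<le> k \<longrightarrow> (real k)\<^sup>2 * real n \<le> y * real m * ln (real n)
           \<longrightarrow> 1 - h n \<le> rig_prob n m k (\<lambda>F. \<not> rig_connected n F)"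
    using eventually_ge_at_top[of 3]
  proof eventually_elim
    case (elim n)
    show ?case
    proof (intro allI impI)
      fix m k :: nat
      assume "1 \<le> k" and "(real k)\<^sup>2 * real n \<le> y * real m * ln (real n)"
      with rig_prob_disconnected_ge_explicit[OF y] elim
      show "1 - h n \<le> rig_prob n m k (\<lambda>F. \<not> rig_connected n F)" unfolding h_def by force
    qed
  qed
qed

lemma rig_prob_disconnected_tendsto_1:
  fixes k m :: "nat \<Rightarrow> nat"
  assumes model: "\<forall>n\<ge>1. 1 \<le> k n \<and> k n \<le> m n" and mn: "\<forall>n\<ge>1. n \<le> m n"
    and lim: "limsup (\<lambda>n. ereal ((real (k n))\<^sup>2 * real n / (real (m n) * ln (real n)))) < 1"
  shows "(\<lambda>n. rig_prob n (m n) (k n) (\<lambda>F. \<not> rig_connected n F)) \<longlonglongrightarrow> 1"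
proof -
  obtain z where z: "limsup (\<lambda>n. ereal ((real (k n))\<^sup>2 * real n / (real (m n) * ln (real n)))) < z" "z < 1"
    using lim dense by blast
  then obtain y0 where y0: "z = ereal y0" by (cases z) auto
  define y where "y = max y0 (1/2)"
  have y: "0 < y" "y < 1" "y0 \<le> y" unfolding y_def using z y0 by auto
  obtain h where h: "h \<longlonglongrightarrow> 0"
    and ev_h: "\<forall>\<^sub>F n in sequentially. \<forall>m k. 1 \<le> k \<longrightarrow> (real k)\<^sup>2 * real n \<le> y * real m * ln (real n)
           \<longrightarrow> 1 - h n \<le> rig_prob n m k (\<lambda>F. \<not> rig_connected n F)"
    using rig_prob_disconnected_eventually_ge[OF y(1,2)] by blast
  have "\<forall>\<^sub>F n in sequentially. (real (k n))\<^sup>2 * real n / (real (m n) * ln (real n)) < y"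
    using Limsup_lessD[OF z(1)] y0 y(3) by (auto elim: eventually_mono)
  then have lower: "\<forall>\<^sub>F n in sequentially. 1 - h n \<le> rig_prob n (m n) (k n) (\<lambda>F. \<not> rig_connected n F)"
    using ev_h eventually_ge_at_top[of 3]
  proof eventually_elim
    case (elim n)
    then have "n \<le> m n" "1 \<le> k n" using model mn by auto
    then have pos: "real (m n) * ln (real n) > 0" using elim by simp
    then have "(real (k n))\<^sup>2 * real n \<le> y * real (m n) * ln (real n)"
      using elim by (simp add: field_simps)
    then show ?case using elim \<open>1 \<le> k n\<close> by blast
  qed
  have "(\<lambda>n. 1 - h n) \<longlonglongrightarrow> 1" using tendsto_diff[OF tendsto_const h, of 1] by simp
  from tendsto_sandwich[OF lower _ this tendsto_const] show ?thesis by (simp add: rig_prob_le_1)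
qed

theorem theorem5:
  fixes k m :: "nat \<Rightarrow> nat"
  assumes model: "\<forall>n\<ge>1. 1 \<le> k n \<and> k n \<le> m n"
    and mn: "\<forall>n\<ge>1. n \<le> m n"
  shows "(liminf (\<lambda>n. ereal ((real (k n))\<^sup>2 * real n / (real (m n) * ln (real n)))) > 1
            \<longrightarrow> ((\<lambda>n. rig_prob n (m n) (k n) (rig_connected n)) \<longlonglongrightarrow> 1))
       \<and> (limsup (\<lambda>n. ereal ((real (k n))\<^sup>2 * real n / (real (m n) * ln (real n)))) < 1
            \<longrightarrow> ((\<lambda>n. rig_prob n (m n) (k n) (\<lambda>F. \<not> rig_connected n F)) \<longlonglongrightarrow> 1))"
  using rig_prob_connected_tendsto_1[OF model mn] rig_prob_disconnected_tendsto_1[OF model mn] by blast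

end
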